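(* Let $k\geqslant 2$ be an integer, and in the braid group $B_5$ let $\delta_3=\sigma_2\sigma_1$, $\Delta_3=\sigma_2\sigma_1\sigma_2$ and $\beta_k=\delta_3^{3k+1}\sigma_4^{2k+2}\sigma_3\sigma_4^{2k-1}$. Then the left normal form of $\beta_k$ is \[\beta_k=(\Delta_3\sigma_4)^{2k}(\delta_3\sigma_4\sigma_3\sigma_4)(\sigma_3\sigma_4)(\sigma_4)^{2k-3}.\] In particular $\inf\beta_k=0$ and $\sup\beta_k=4k-1$.
   Context: $B_5$ has generators $\sigma_1,\dots,\sigma_4$ with the standard braid relations; $B_5^+$ is the positive braid monoid, $\Delta=(\sigma_1\sigma_2\sigma_3\sigma_4)(\sigma_1\sigma_2\sigma_3)(\sigma_1\sigma_2)\sigma_1$. Write $x\preccurlyeq y$ iff $x^{-1}y\in B_5^+$; simple braids are those $x$ with $1\preccurlyeq x\preccurlyeq\Delta$. Simple $s_1,s_2$ are left-weighted if no generator $\sigma_i$ makes both $s_1\sigma_i$ and $\sigma_i^{-1}s_2$ simple. The left normal form of $x$ is the unique expression $x=\Delta^p x_1\cdots x_r$ with $x_i$ simple, different from $1$ and $\Delta$, and consecutive factors left-weighted; $\inf x=p$ and $\sup x=p+r$. *)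

theory Defs
  imports Main
begin

text \<open>A letter (i, True) is sigma_i, (i, False) is sigma_i^{-1}.
Braids are words modulo the congruence bequiv generated by free cancellation
and the braid relations; equality in B_5 is bequiv.\<close>

type_synonym bword = "(nat \<times> bool) list"

inductive bequiv :: "bword \<Rightarrow> bword \<Rightarrow> bool" where
  refl: "bequiv w w"
| sym: "bequiv u v \<Longrightarrow> bequiv v u"
| trans: "bequiv u v \<Longrightarrow> bequiv v w \<Longrightarrow> bequiv u w"
| ctx: "bequiv u v \<Longrightarrow> bequiv (a @ u @ b) (a @ v @ b)"
| cancel: "i \<in> {1..4} \<Longrightarrow> bequiv [(i, e), (i, \<not> e)] []"
| far_comm: "i \<in> {1..4} \<Longrightarrow> j \<in> {1..4} \<Longrightarrow> i + 2 \<le> j \<Longrightarrow>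
     bequiv [(i, True), (j, True)] [(j, True), (i, True)]"
| braid_rel: "i \<in> {1..3} \<Longrightarrow>
     bequiv [(i, True), (Suc i, True), (i, True)] [(Suc i, True), (i, True), (Suc i, True)]"

definition sig :: "nat \<Rightarrow> bword" where "sig i = [(i, True)]"

definition winv :: "bword \<Rightarrow> bword" where
  "winv w = rev (map (\<lambda>(i, e). (i, \<not> e)) w)"

definition wpow :: "bword \<Rightarrow> nat \<Rightarrow> bword" where
  "wpow w n = concat (replicate n w)"

definition Delta :: bword where
  "Delta = sig 1 @ sig 2 @ sig 3 @ sig 4 @ sig 1 @ sig 2 @ sig 3 @ sig 1 @ sig 2 @ sig 1"

definition Delta_pow :: "int \<Rightarrow> bword" where
  "Delta_pow p = (if 0 \<le> p then wpow Delta (nat p) else wpow (winv Delta) (nat (- p)))"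

definition positive :: "bword \<Rightarrow> bool" where
  "positive x \<longleftrightarrow> (\<exists>w. (\<forall>l\<in>set w. fst l \<in> {1..4} \<and> snd l) \<and> bequiv x w)"

definition prefix_le :: "bword \<Rightarrow> bword \<Rightarrow> bool" where
  "prefix_le x y \<longleftrightarrow> positive (winv x @ y)"

definition simple :: "bword \<Rightarrow> bool" where
  "simple x \<longleftrightarrow> prefix_le [] x \<and> prefix_le x Delta"

definition left_weighted :: "bword \<Rightarrow> bword \<Rightarrow> bool" where
  "left_weighted s1 s2 \<longleftrightarrow>
     \<not> (\<exists>i\<in>{1..4}. simple (s1 @ sig i) \<and> simple (winv (sig i) @ s2))"

definition is_LNF :: "bword \<Rightarrow> int \<Rightarrow> bword list \<Rightarrow> bool" where
  "is_LNF x p xs \<longleftrightarrow>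
     bequiv x (Delta_pow p @ concat xs) \<and>
     (\<forall>s\<in>set xs. simple s \<and> \<not> bequiv s [] \<and> \<not> bequiv s Delta) \<and>
     (\<forall>i. Suc i < length xs \<longrightarrow> left_weighted (xs ! i) (xs ! Suc i))"

definition binf :: "bword \<Rightarrow> int" where
  "binf x = (THE p. \<exists>xs. is_LNF x p xs)"

definition bsup :: "bword \<Rightarrow> int" where
  "bsup x = (THE n. \<exists>p xs. is_LNF x p xs \<and> n = p + int (length xs))"

definition delta3 :: bword where "delta3 = sig 2 @ sig 1"
definition Delta3 :: bword where "Delta3 = sig 2 @ sig 1 @ sig 2"

end

theory Submission
  imports Defs "HOL-Combinatorics.Multiset_Permutations"
begin

text \<open>Positive braids are words in the generators up to the braid relations, and
  simple braids are the positive words that are reduced for their permutation in \<open>S\<^sub>5\<close>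
  (exchange condition and Matsumoto's theorem, checked on \<open>S\<^sub>5\<close> by evaluation). In a
  left-weighted chain of simple factors every generator dividing the product already divides the
  first factor, so the product of a normal chain never has \<open>\<Delta>\<close> as a prefix; multiplying by the
  complements of the factors in \<open>\<Delta>\<close> turns this into equality of the lengths of two normal chains
  with equal products. Garside's normal form \<open>\<Delta>\<^sup>-\<^sup>k N\<close> embeds the positive monoid in
  \<open>B\<^sub>5\<close>, so \<open>inf\<close> and \<open>sup\<close> are well defined and can be read off any left normal form.
  For \<open>\<beta>\<^sub>k\<close> it remains to rewrite the claimed normal form into \<open>\<beta>\<^sub>k\<close> with the braid
  relations, and to check simplicity and left-weightedness of its four distinct factors, which
  reduces to comparing exponent sums with inversion numbers.\<close>

definition far :: "nat \<Rightarrow> nat \<Rightarrow> bool" where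
  "far i j \<longleftrightarrow> 1 \<le> i \<and> i \<le> 4 \<and> 1 \<le> j \<and> j \<le> 4 \<and> (i + 2 \<le> j \<or> j + 2 \<le> i)"

definition adj :: "nat \<Rightarrow> nat \<Rightarrow> bool" where
  "adj i j \<longleftrightarrow> 1 \<le> i \<and> i \<le> 4 \<and> 1 \<le> j \<and> j \<le> 4 \<and> (j = i + 1 \<or> i = j + 1)"

lemma far_sym: "far i j \<Longrightarrow> far j i" by (auto simp: far_def)
lemma adj_sym: "adj i j \<Longrightarrow> adj j i" by (auto simp: adj_def)
lemma far_ne: "far i j \<Longrightarrow> i \<noteq> j" by (auto simp: far_def)
lemma adj_ne: "adj i j \<Longrightarrow> i \<noteq> j" by (auto simp: adj_def)
lemma far_not_adj: "far i j \<Longrightarrow> \<not> adj i j" by (auto simp: adj_def far_def)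
lemma adj_adj_far: "adj a c \<Longrightarrow> adj c b \<Longrightarrow> a \<noteq> b \<Longrightarrow> far a b" by (auto simp: adj_def far_def)
lemma far_or_adj: "1 \<le> i \<Longrightarrow> i \<le> 4 \<Longrightarrow> 1 \<le> j \<Longrightarrow> j \<le> 4 \<Longrightarrow> i \<noteq> j \<Longrightarrow> far i j \<or> adj i j"
  by (auto simp: adj_def far_def)

lemma gens_list_all:
  assumes "list_all P [1,2,3,4]" "1 \<le> (i::nat)" "i \<le> 4" shows "P i"
proof -
  have "i = 1 \<or> i = 2 \<or> i = 3 \<or> i = 4" using assms(2,3) by auto
  then show ?thesis using assms(1) by auto
qed

section \<open>Permutations of five points\<close>

text \<open>A permutation of \<open>{0,\<dots>,4}\<close> is a list in one-line notation. The generator \<open>\<sigma>\<^sub>i\<close> acts as the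
  transposition \<open>s\<^sub>i = (i-1 i)\<close>, by swapping positions on the right and values on the left.\<close>

definition perm_id :: "nat list" where "perm_id = [0,1,2,3,4]"
definition perm_longest :: "nat list" where "perm_longest = [4,3,2,1,0]"

definition is_perm5 :: "nat list \<Rightarrow> bool" where
  "is_perm5 p \<longleftrightarrow> distinct p \<and> set p = {0,1,2,3,4}"

fun swap_pos :: "nat \<Rightarrow> nat list \<Rightarrow> nat list" where
  "swap_pos i [a,b,c,d,e] = (if i = 1 then [b,a,c,d,e] else if i = 2 then [a,c,b,d,e] else
     if i = 3 then [a,b,d,c,e] else if i = 4 then [a,b,c,e,d] else [a,b,c,d,e])"
| "swap_pos i p = p"

definition swap_val :: "nat \<Rightarrow> nat list \<Rightarrow> nat list" where
  "swap_val a p = (if 1 \<le> a \<and> a \<le> 4 then map (\<lambda>x. if x + 1 = a then a else if x = a then a - 1 else x) p else p)"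

definition perm_comp :: "nat list \<Rightarrow> nat list \<Rightarrow> nat list" where
  "perm_comp p q = map (\<lambda>x. p ! x) q"

fun inversions :: "nat list \<Rightarrow> nat" where
  "inversions [a,b,c,d,e] = (if b<a then 1 else 0) + (if c<a then 1 else 0) + (if d<a then 1 else 0) + (if e<a then 1 else 0)
   + (if c<b then 1 else 0) + (if d<b then 1 else 0) + (if e<b then 1 else 0) + (if d<c then 1 else 0)
   + (if e<c then 1 else 0) + (if e<d then 1 else 0)"
| "inversions _ = 0"

definition left_descent :: "nat \<Rightarrow> nat list \<Rightarrow> bool" where
  "left_descent a p \<longleftrightarrow> inversions (swap_val a p) < inversions p"

text \<open>The join of \<open>p\<close> and \<open>s\<^sub>i\<close> in the left weak order. If \<open>i\<close> is not a left descent, then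
  \<open>p = A (i-1) B i C\<close> and the join moves the entries of \<open>B\<close> above \<open>i\<close> before, and those below
  \<open>i-1\<close> after, the pair \<open>i (i-1)\<close>.\<close>

definition join_gen :: "nat list \<Rightarrow> nat \<Rightarrow> nat list" where
  "join_gen p i = (if left_descent i p then p else
     (let x = i - 1; y = i; A = takeWhile (\<lambda>z. z \<noteq> x) p; r = tl (dropWhile (\<lambda>z. z \<noteq> x) p);
          B = takeWhile (\<lambda>z. z \<noteq> y) r; C = tl (dropWhile (\<lambda>z. z \<noteq> y) r)
      in A @ filter (\<lambda>z. y < z) B @ [y, x] @ filter (\<lambda>z. z < x) B @ C))"

text \<open>The facts about \<open>S\<^sub>5\<close> below are checked by evaluation over all 120 permutations.\<close>

lemma perms5_list_all:
  assumes "list_all P (permutations_of_set_list [0,1,2,3,4])" "is_perm5 p"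
  shows "P p"
proof -
  have "p \<in> permutations_of_set (set [0,1,2,3,4::nat])"
    using assms(2) by (auto simp: is_perm5_def permutations_of_set_def)
  then show ?thesis
    using assms(1) permutations_of_list[of "[0,1,2,3,4::nat]"] by (auto simp: list_all_iff)
qed

lemma swap_pos_out: "\<not> (1 \<le> i \<and> i \<le> 4) \<Longrightarrow> swap_pos i p = p"
  by (cases "(i,p)" rule: swap_pos.cases) auto

lemma swap_val_out: "\<not> (1 \<le> i \<and> i \<le> 4) \<Longrightarrow> swap_val i p = p"
  unfolding swap_val_def by auto

lemma inversions_swap_pos_le:
  assumes "is_perm5 p" shows "inversions (swap_pos i p) \<le> inversions p + 1"
proof (cases "1 \<le> i \<and> i \<le> 4")
  case True
  have "list_all (\<lambda>p. list_all (\<lambda>i. inversions (swap_pos i p) \<le> inversions p + 1) [1,2,3,4])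
          (permutations_of_set_list [0,1,2,3,4])"
    by code_simp
  from gens_list_all[OF perms5_list_all[OF this assms]] True show ?thesis by blast
qed (simp add: swap_pos_out)

lemma inversions_swap_val_le:
  assumes "is_perm5 p" shows "inversions (swap_val i p) \<le> inversions p + 1"
proof (cases "1 \<le> i \<and> i \<le> 4")
  case True
  have "list_all (\<lambda>p. list_all (\<lambda>i. inversions (swap_val i p) \<le> inversions p + 1) [1,2,3,4])
          (permutations_of_set_list [0,1,2,3,4])"
    by code_simp
  from gens_list_all[OF perms5_list_all[OF this assms]] True show ?thesis by blast
qed (simp add: swap_val_out)

lemma inversions_le_10: "is_perm5 p \<Longrightarrow> inversions p \<le> 10"
  by (rule perms5_list_all[where P = "\<lambda>p. inversions p \<le> 10"]) code_simp

lemma gen_perm_id: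
  assumes "1 \<le> i" "i \<le> 4"
  shows "\<not> left_descent i perm_id" "join_gen perm_id i = swap_pos i perm_id" "inversions (swap_pos i perm_id) = 1"
proof -
  have "list_all (\<lambda>i. \<not> left_descent i perm_id \<and> join_gen perm_id i = swap_pos i perm_id
          \<and> inversions (swap_pos i perm_id) = 1) [1,2,3,4]"
    by code_simp
  from gens_list_all[OF this assms] show "\<not> left_descent i perm_id"
      "join_gen perm_id i = swap_pos i perm_id" "inversions (swap_pos i perm_id) = 1"
    by blast+
qed

lemma left_descents_swap_val:
  assumes "is_perm5 p" "1 \<le> a" "a \<le> 4" "1 \<le> b" "b \<le> 4" "a \<noteq> b" "left_descent a p" "left_descent b p"
  shows "left_descent a (swap_val b p)" "adj a b \<Longrightarrow> left_descent b (swap_val a (swap_val b p))"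
proof -
  have "list_all (\<lambda>p. list_all (\<lambda>a. list_all (\<lambda>b. a \<noteq> b \<and> left_descent a p \<and> left_descent b p \<longrightarrow>
          left_descent a (swap_val b p) \<and> ((b = a + 1 \<or> a = b + 1) \<longrightarrow> left_descent b (swap_val a (swap_val b p))))
          [1,2,3,4]) [1,2,3,4]) (permutations_of_set_list [0,1,2,3,4])"
    by code_simp
  from gens_list_all[OF gens_list_all[OF perms5_list_all[OF this assms(1)] assms(2,3)] assms(4,5)]
  show "left_descent a (swap_val b p)" "adj a b \<Longrightarrow> left_descent b (swap_val a (swap_val b p))"
    using assms(6-8) by (auto simp: adj_def)
qed

lemma all_left_descents_longest:
  assumes "is_perm5 p" "\<And>a. 1 \<le> a \<Longrightarrow> a \<le> 4 \<Longrightarrow> left_descent a p"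
  shows "p = perm_longest"
proof -
  have "list_all (\<lambda>p. list_all (\<lambda>a. left_descent a p) [1,2,3,4] \<longrightarrow> p = perm_longest)
          (permutations_of_set_list [0,1,2,3,4])"
    by code_simp
  from perms5_list_all[OF this assms(1)] show ?thesis using assms(2) by simp
qed

lemma left_descent_longest: "1 \<le> i \<Longrightarrow> i \<le> 4 \<Longrightarrow> left_descent i perm_longest"
  by (rule gens_list_all[where P = "\<lambda>i. left_descent i perm_longest"]) code_simp

lemma right_ascent_exists:
  assumes "is_perm5 p" "p \<noteq> perm_longest"
  obtains j where "1 \<le> j" "j \<le> 4" "inversions (swap_pos j p) = inversions p + 1"
proof -
  have "list_all (\<lambda>p. p \<noteq> perm_longest \<longrightarrow> list_ex (\<lambda>j. inversions (swap_pos j p) = inversions p + 1) [1,2,3,4])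
          (permutations_of_set_list [0,1,2,3,4])"
    by code_simp
  from perms5_list_all[OF this assms(1)] assms(2) obtain j where
    "j \<in> {1,2,3,4::nat}" "inversions (swap_pos j p) = inversions p + 1"
    by (auto simp: list_ex_iff)
  then show ?thesis by (intro that) auto
qed

lemma join_gen_ne:
  assumes "is_perm5 p" "1 \<le> i" "i \<le> 4" "\<not> left_descent i p"
  shows "join_gen p i \<noteq> p"
proof -
  have "list_all (\<lambda>p. list_all (\<lambda>i. \<not> left_descent i p \<longrightarrow> join_gen p i \<noteq> p) [1,2,3,4])
          (permutations_of_set_list [0,1,2,3,4])"
    by code_simp
  from gens_list_all[OF perms5_list_all[OF this assms(1)] assms(2,3)] assms(4) show ?thesis by blast
qed

text \<open>The join with \<open>s\<^sub>i\<close> after stripping a left descent \<open>a\<close>: it passes through \<open>s\<^sub>a\<close> when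
  \<open>a\<close> and \<open>i\<close> commute, and through \<open>s\<^sub>a s\<^sub>i\<close> and a join with \<open>s\<^sub>a\<close> when they are adjacent.\<close>

definition join_gen_recursion :: "nat list \<Rightarrow> nat \<Rightarrow> nat \<Rightarrow> bool" where
  "join_gen_recursion p a i \<longleftrightarrow> (let q = join_gen (swap_val a p) i in
     if a + 2 \<le> i \<or> i + 2 \<le> a then join_gen p i = swap_val a q \<and> inversions (join_gen p i) = inversions q + 1
     else left_descent i q \<and> (let r = join_gen (swap_val i q) a in
       join_gen p i = swap_val a (swap_val i r) \<and> inversions (join_gen p i) = inversions r + 2))"

lemma join_gen_recursion:
  assumes "is_perm5 p" "1 \<le> i" "i \<le> 4" "1 \<le> a" "a \<le> 4" "a \<noteq> i" "left_descent a p" "\<not> left_descent i p"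
  shows "join_gen_recursion p a i"
proof -
  have "list_all (\<lambda>p. list_all (\<lambda>i. list_all (\<lambda>a. a \<noteq> i \<and> left_descent a p \<and> \<not> left_descent i p \<longrightarrow>
          join_gen_recursion p a i) [1,2,3,4]) [1,2,3,4]) (permutations_of_set_list [0,1,2,3,4])"
    unfolding join_gen_recursion_def by code_simp
  from gens_list_all[OF gens_list_all[OF perms5_list_all[OF this assms(1)] assms(2,3)] assms(4,5)] assms(6-8)
  show ?thesis by blast
qed

section \<open>The positive braid monoid and left cancellation\<close>

text \<open>A positive braid is a word over \<open>{1,\<dots>,4}\<close>, the letter \<open>i\<close> standing for \<open>\<sigma>\<^sub>i\<close>;
  \<open>peq\<close> is equality in \<open>B\<^sub>5\<^sup>+\<close>.\<close>

inductive braid_step :: "nat list \<Rightarrow> nat list \<Rightarrow> bool" where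
  far_swap: "far i j \<Longrightarrow> braid_step (xs @ i # j # ys) (xs @ j # i # ys)"
| braid: "adj i j \<Longrightarrow> braid_step (xs @ i # j # i # ys) (xs @ j # i # j # ys)"

abbreviation peq :: "nat list \<Rightarrow> nat list \<Rightarrow> bool" where "peq \<equiv> braid_step\<^sup>*\<^sup>*"

lemma braid_step_sym: "braid_step u v \<Longrightarrow> braid_step v u"
  by (induction rule: braid_step.induct) (auto intro: braid_step.intros far_sym adj_sym)

lemma peq_sym: "peq u v \<Longrightarrow> peq v u"
  by (induction rule: rtranclp_induct) (auto intro: braid_step_sym converse_rtranclp_into_rtranclp)

lemma peq_trans[trans]: "peq u v \<Longrightarrow> peq v w \<Longrightarrow> peq u w" by (rule rtranclp_trans)

lemma braid_step_length: "braid_step u v \<Longrightarrow> length u = length v"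
  by (induction rule: braid_step.induct) auto

lemma peq_length: "peq u v \<Longrightarrow> length u = length v"
  by (induction rule: rtranclp_induct) (auto dest: braid_step_length)

lemma braid_step_append: "braid_step u v \<Longrightarrow> braid_step (w @ u @ z) (w @ v @ z)"
proof (induction rule: braid_step.induct)
  case (far_swap i j xs ys) thus ?case using braid_step.far_swap[of i j "w @ xs" "ys @ z"] by simp
next
  case (braid i j xs ys) thus ?case using braid_step.braid[of i j "w @ xs" "ys @ z"] by simp
qed

lemma peq_append: "peq u v \<Longrightarrow> peq (w @ u @ z) (w @ v @ z)"
  by (induction rule: rtranclp_induct) (auto intro: rtranclp.rtrancl_into_rtrancl braid_step_append)

lemma peq_append_left: "peq u v \<Longrightarrow> peq (w @ u) (w @ v)"
  using peq_append[of u v w "[]"] by simp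
lemma peq_append_right: "peq u v \<Longrightarrow> peq (u @ z) (v @ z)"
  using peq_append[of u v "[]" z] by simp
lemma peq_Cons: "peq u v \<Longrightarrow> peq (x # u) (x # v)"
  using peq_append_left[of u v "[x]"] by simp
lemma peq_Cons_trans: "peq X (c # Z) \<Longrightarrow> peq Z Z' \<Longrightarrow> peq X (c # Z')"
  using peq_Cons peq_trans by blast

lemma peq_far_swap: "far i j \<Longrightarrow> peq (i # j # ys) (j # i # ys)"
  using braid_step.far_swap[of i j "[]" ys] by auto
lemma peq_braid: "adj i j \<Longrightarrow> peq (i # j # i # ys) (j # i # j # ys)"
  using braid_step.braid[of i j "[]" ys] by auto

text \<open>\<open>lcm_split a b X Y\<close> says that \<open>a X\<close> and \<open>b Y\<close> both factor through the least common
  multiple of \<open>a\<close> and \<open>b\<close>, namely \<open>a\<close>, \<open>ab = ba\<close> or \<open>aba = bab\<close>.\<close>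

definition lcm_split :: "nat \<Rightarrow> nat \<Rightarrow> nat list \<Rightarrow> nat list \<Rightarrow> bool" where
  "lcm_split a b X Y \<longleftrightarrow> (a = b \<and> peq X Y) \<or> (far a b \<and> (\<exists>Z. peq X (b # Z) \<and> peq Y (a # Z)))
     \<or> (adj a b \<and> (\<exists>Z. peq X (b # a # Z) \<and> peq Y (a # b # Z)))"

lemma lcm_split_braid_step: assumes "braid_step (c # V) (b # Y)" shows "lcm_split c b V Y"
  using assms
proof (cases rule: braid_step.cases)
  case (far_swap i j xs ys)
  then show ?thesis by (cases xs) (auto simp: lcm_split_def intro: braid_step.far_swap)
next
  case (braid i j xs ys)
  then show ?thesis by (cases xs) (auto simp: lcm_split_def intro: braid_step.braid)
qed

lemma lcm_split_peq_left: "peq X V \<Longrightarrow> lcm_split a b V Y \<Longrightarrow> lcm_split a b X Y"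
  unfolding lcm_split_def by (meson peq_trans)
lemma lcm_split_peq_right: "lcm_split a b X V \<Longrightarrow> peq V Y \<Longrightarrow> lcm_split a b X Y"
  unfolding lcm_split_def by (meson peq_trans peq_sym)

lemma lcm_split_same: "lcm_split c c X Y \<Longrightarrow> peq X Y"
  unfolding lcm_split_def using far_ne adj_ne by blast
lemma lcm_split_far: "lcm_split a b X Y \<Longrightarrow> far a b \<Longrightarrow> \<exists>Z. peq X (b # Z) \<and> peq Y (a # Z)"
  unfolding lcm_split_def using far_ne far_not_adj by blast
lemma lcm_split_adj: "lcm_split a b X Y \<Longrightarrow> adj a b \<Longrightarrow> \<exists>Z. peq X (b # a # Z) \<and> peq Y (a # b # Z)"
  unfolding lcm_split_def using adj_ne far_not_adj by blast

lemma lcm_split_sameI: "peq X Y \<Longrightarrow> lcm_split a a X Y" by (simp add: lcm_split_def)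
lemma lcm_split_farI: "far a b \<Longrightarrow> peq X (b # Z) \<Longrightarrow> peq Y (a # Z) \<Longrightarrow> lcm_split a b X Y"
  by (auto simp: lcm_split_def)
lemma lcm_split_adjI: "adj a b \<Longrightarrow> peq X (b # a # Z) \<Longrightarrow> peq Y (a # b # Z) \<Longrightarrow> lcm_split a b X Y"
  by (auto simp: lcm_split_def)

text \<open>Transitivity of \<open>lcm_split\<close> is Garside's cube condition. Its four cases below assume the
  conclusion of the main induction for all shorter words.\<close>

lemma lcm_split_far_far:
  assumes IH: "\<And>a b X' Y'. length X' < n \<Longrightarrow> peq (a # X') (b # Y') \<Longrightarrow> lcm_split a b X' Y'"
    and len: "length Z1 < n" and fac: "far a c" and fcb: "far c b"
    and x: "peq X (c # Z1)" and y: "peq Y (c # Z2)" and z: "peq (a # Z1) (b # Z2)"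
  shows "lcm_split a b X Y"
proof -
  have split: "lcm_split a b Z1 Z2" using IH[OF len z] .
  consider "a = b" | "far a b" | "adj a b" using far_or_adj[of a b] fac fcb by (auto simp: far_def)
  then show ?thesis
  proof cases
    case 1
    then have "peq (c # Z1) (c # Z2)" using split lcm_split_same peq_Cons by blast
    from peq_trans[OF peq_trans[OF x this] peq_sym[OF y]] show ?thesis
      unfolding 1 by (rule lcm_split_sameI)
  next
    case fab: 2
    then obtain R where z1: "peq Z1 (b # R)" and z2: "peq Z2 (a # R)" using lcm_split_far split by blast
    have "peq X (c # b # R)" by (rule peq_Cons_trans[OF x z1])
    also have "peq \<dots> (b # c # R)" using fcb by (rule peq_far_swap)
    finally have X: "peq X (b # c # R)" .
    have "peq Y (c # a # R)" by (rule peq_Cons_trans[OF y z2])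
    also have "peq \<dots> (a # c # R)" using far_sym[OF fac] by (rule peq_far_swap)
    finally show ?thesis by (rule lcm_split_farI[OF fab X])
  next
    case aab: 3
    then obtain R where z1: "peq Z1 (b # a # R)" and z2: "peq Z2 (a # b # R)" using lcm_split_adj split by blast
    have "peq X (c # b # a # R)" by (rule peq_Cons_trans[OF x z1])
    also have "peq \<dots> (b # c # a # R)" using fcb by (rule peq_far_swap)
    also have "peq \<dots> (b # a # c # R)" using far_sym[OF fac] by (intro peq_Cons peq_far_swap)
    finally have X: "peq X (b # a # c # R)" .
    have "peq Y (c # a # b # R)" by (rule peq_Cons_trans[OF y z2])
    also have "peq \<dots> (a # c # b # R)" using far_sym[OF fac] by (rule peq_far_swap)
    also have "peq \<dots> (a # b # c # R)" using fcb by (intro peq_Cons peq_far_swap)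
    finally show ?thesis by (rule lcm_split_adjI[OF aab X])
  qed
qed

lemma lcm_split_far_adj:
  assumes IH: "\<And>a b X' Y'. length X' < n \<Longrightarrow> peq (a # X') (b # Y') \<Longrightarrow> lcm_split a b X' Y'"
    and len: "length Z1 < n" and fac: "far a c" and acb: "adj c b"
    and x: "peq X (c # Z1)" and y: "peq Y (c # b # Z2)" and z: "peq (a # Z1) (b # c # Z2)"
  shows "lcm_split a b X Y"
proof -
  have split: "lcm_split a b Z1 (c # Z2)" using IH[OF len z] .
  have lenZ2: "length Z2 < n" using peq_length[OF z] len by simp
  have "a \<noteq> b" using fac acb far_not_adj adj_sym by blast
  then consider "far a b" | "adj a b" using far_or_adj[of a b] fac acb by (auto simp: far_def adj_def)
  then show ?thesis
  proof cases
    case fab: 1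
    then obtain R where z1: "peq Z1 (b # R)" and z2: "peq (c # Z2) (a # R)" using lcm_split_far split by blast
    obtain R' where z2': "peq Z2 (a # R')" and r: "peq R (c # R')"
      using lcm_split_far[OF IH[OF lenZ2 z2] far_sym[OF fac]] by blast
    have "peq X (c # b # c # R')" by (rule peq_Cons_trans[OF x peq_Cons_trans[OF z1 r]])
    also have "peq \<dots> (b # c # b # R')" using acb by (rule peq_braid)
    finally have X: "peq X (b # c # b # R')" .
    have "peq Y (c # b # a # R')" by (rule peq_Cons_trans[OF y peq_Cons[OF z2']])
    also have "peq \<dots> (c # a # b # R')" using far_sym[OF fab] by (intro peq_Cons peq_far_swap)
    also have "peq \<dots> (a # c # b # R')" using far_sym[OF fac] by (rule peq_far_swap)
    finally show ?thesis by (rule lcm_split_farI[OF fab X])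
  next
    case aab: 2
    then obtain R where z1: "peq Z1 (b # a # R)" and z2: "peq (c # Z2) (a # b # R)"
      using lcm_split_adj split by blast
    obtain R' where z2': "peq Z2 (a # R')" and r: "peq (b # R) (c # R')"
      using lcm_split_far[OF IH[OF lenZ2 z2] far_sym[OF fac]] by blast
    have lenR: "length R < n" using peq_length[OF z1] len by simp
    obtain R'' where r1: "peq R (c # b # R'')" and r2: "peq R' (b # c # R'')"
      using lcm_split_adj[OF IH[OF lenR r] adj_sym[OF acb]] by blast
    have "peq X (c # b # a # c # b # R'')" by (rule peq_Cons_trans[OF x peq_Cons_trans[OF z1 peq_Cons[OF r1]]])
    also have "peq \<dots> (c # b # c # a # b # R'')" using fac by (intro peq_Cons peq_far_swap)
    also have "peq \<dots> (b # c # b # a # b # R'')" using acb by (rule peq_braid)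
    also have "peq \<dots> (b # c # a # b # a # R'')" using adj_sym[OF aab] by (intro peq_Cons peq_braid)
    also have "peq \<dots> (b # a # c # b # a # R'')" using far_sym[OF fac] by (intro peq_Cons peq_far_swap)
    finally have X: "peq X (b # a # c # b # a # R'')" .
    have "peq Y (c # b # a # b # c # R'')" by (rule peq_Cons_trans[OF y peq_Cons[OF peq_Cons_trans[OF z2' r2]]])
    also have "peq \<dots> (c # a # b # a # c # R'')" using adj_sym[OF aab] by (intro peq_Cons peq_braid)
    also have "peq \<dots> (a # c # b # a # c # R'')" using far_sym[OF fac] by (rule peq_far_swap)
    also have "peq \<dots> (a # c # b # c # a # R'')" using fac by (intro peq_Cons peq_far_swap)
    also have "peq \<dots> (a # b # c # b # a # R'')" using acb by (intro peq_Cons peq_braid)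
    finally show ?thesis by (rule lcm_split_adjI[OF aab X])
  qed
qed

lemma lcm_split_adj_far:
  assumes IH: "\<And>a b X' Y'. length X' < n \<Longrightarrow> peq (a # X') (b # Y') \<Longrightarrow> lcm_split a b X' Y'"
    and len: "length (c # Z1) < n" and aac: "adj a c" and fcb: "far c b"
    and x: "peq X (c # a # Z1)" and y: "peq Y (c # Z2)" and z: "peq (a # c # Z1) (b # Z2)"
  shows "lcm_split a b X Y"
proof -
  have split: "lcm_split a b (c # Z1) Z2" using IH[OF len z] .
  have lenZ1: "length Z1 < n" using len by simp
  have "a \<noteq> b" using aac fcb far_not_adj adj_sym by blast
  then consider "far a b" | "adj a b" using far_or_adj[of a b] aac fcb by (auto simp: far_def adj_def)
  then show ?thesis
  proof cases
    case fab: 1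
    then obtain R where z1: "peq (c # Z1) (b # R)" and z2: "peq Z2 (a # R)" using lcm_split_far split by blast
    obtain R' where z1': "peq Z1 (b # R')" and r: "peq R (c # R')"
      using lcm_split_far[OF IH[OF lenZ1 z1] fcb] by blast
    have "peq X (c # a # b # R')" by (rule peq_Cons_trans[OF x peq_Cons[OF z1']])
    also have "peq \<dots> (c # b # a # R')" using fab by (intro peq_Cons peq_far_swap)
    also have "peq \<dots> (b # c # a # R')" using fcb by (rule peq_far_swap)
    finally have X: "peq X (b # c # a # R')" .
    have "peq Y (c # a # c # R')" by (rule peq_Cons_trans[OF y peq_Cons_trans[OF z2 r]])
    also have "peq \<dots> (a # c # a # R')" using adj_sym[OF aac] by (rule peq_braid)
    finally show ?thesis by (rule lcm_split_farI[OF fab X])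
  next
    case aab: 2
    then obtain R where z1: "peq (c # Z1) (b # a # R)" and z2: "peq Z2 (a # b # R)"
      using lcm_split_adj split by blast
    obtain R' where z1': "peq Z1 (b # R')" and r: "peq (a # R) (c # R')"
      using lcm_split_far[OF IH[OF lenZ1 z1] fcb] by blast
    have lenR: "length R < n" using peq_length[OF z1] len by simp
    obtain R'' where r1: "peq R (c # a # R'')" and r2: "peq R' (a # c # R'')"
      using lcm_split_adj[OF IH[OF lenR r] aac] by blast
    have "peq X (c # a # b # a # c # R'')" by (rule peq_Cons_trans[OF x peq_Cons[OF peq_Cons_trans[OF z1' r2]]])
    also have "peq \<dots> (c # b # a # b # c # R'')" using aab by (intro peq_Cons peq_braid)
    also have "peq \<dots> (b # c # a # b # c # R'')" using fcb by (rule peq_far_swap)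
    also have "peq \<dots> (b # c # a # c # b # R'')" using far_sym[OF fcb] by (intro peq_Cons peq_far_swap)
    also have "peq \<dots> (b # a # c # a # b # R'')" using adj_sym[OF aac] by (intro peq_Cons peq_braid)
    finally have X: "peq X (b # a # c # a # b # R'')" .
    have "peq Y (c # a # b # c # a # R'')" by (rule peq_Cons_trans[OF y peq_Cons_trans[OF z2 peq_Cons[OF r1]]])
    also have "peq \<dots> (c # a # c # b # a # R'')" using far_sym[OF fcb] by (intro peq_Cons peq_far_swap)
    also have "peq \<dots> (a # c # a # b # a # R'')" using adj_sym[OF aac] by (rule peq_braid)
    also have "peq \<dots> (a # c # b # a # b # R'')" using aab by (intro peq_Cons peq_braid)
    also have "peq \<dots> (a # b # c # a # b # R'')" using fcb by (intro peq_Cons peq_far_swap)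
    finally show ?thesis by (rule lcm_split_adjI[OF aab X])
  qed
qed

lemma lcm_split_adj_adj:
  assumes IH: "\<And>a b X' Y'. length X' < n \<Longrightarrow> peq (a # X') (b # Y') \<Longrightarrow> lcm_split a b X' Y'"
    and len: "length (c # Z1) < n" and aac: "adj a c" and acb: "adj c b"
    and x: "peq X (c # a # Z1)" and y: "peq Y (c # b # Z2)" and z: "peq (a # c # Z1) (b # c # Z2)"
  shows "lcm_split a b X Y"
proof -
  have split: "lcm_split a b (c # Z1) (c # Z2)" using IH[OF len z] .
  have cancel: "peq (d # X') (d # Y') \<Longrightarrow> length X' < n \<Longrightarrow> peq X' Y'" for d X' Y'
    using IH lcm_split_same by blast
  show ?thesis
  proof (cases "a = b")
    case True
    have "peq Z1 Z2" using cancel[OF lcm_split_same[OF split[unfolded True]]] len by simp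
    then have "peq (c # a # Z1) (c # b # Z2)" unfolding True by (intro peq_Cons)
    from peq_trans[OF peq_trans[OF x this] peq_sym[OF y]] show ?thesis
      unfolding True by (rule lcm_split_sameI)
  next
    case False
    then have fab: "far a b" using adj_adj_far aac acb by blast
    then obtain R where z1: "peq (c # Z1) (b # R)" and z2: "peq (c # Z2) (a # R)"
      using lcm_split_far split by blast
    have lenZ2: "length Z2 < n" using peq_length[OF z] len by simp
    obtain R1 where z1': "peq Z1 (b # c # R1)" and r1: "peq R (c # b # R1)"
      using lcm_split_adj[OF IH[OF _ z1] acb] len by fastforce
    obtain R2 where z2': "peq Z2 (a # c # R2)" and r2: "peq R (c # a # R2)"
      using lcm_split_adj[OF IH[OF lenZ2 z2] adj_sym[OF aac]] by blast
    have lenR1: "length (b # R1) < n" using peq_length[OF z1'] len by simp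
    have r12: "peq (b # R1) (a # R2)" using cancel[OF peq_trans[OF peq_sym[OF r1] r2] lenR1] .
    obtain R3 where r1': "peq R1 (a # R3)" and r2': "peq R2 (b # R3)"
      using lcm_split_far[OF IH[OF _ r12] far_sym[OF fab]] lenR1 by fastforce
    have "peq X (c # a # b # c # a # R3)" by (rule peq_Cons_trans[OF x peq_Cons[OF peq_Cons_trans[OF z1' peq_Cons[OF r1']]]])
    also have "peq \<dots> (c # b # a # c # a # R3)" using fab by (intro peq_Cons peq_far_swap)
    also have "peq \<dots> (c # b # c # a # c # R3)" using aac by (intro peq_Cons peq_braid)
    also have "peq \<dots> (b # c # b # a # c # R3)" using acb by (rule peq_braid)
    finally have X: "peq X (b # c # b # a # c # R3)" .
    have "peq Y (c # b # a # c # b # R3)" by (rule peq_Cons_trans[OF y peq_Cons[OF peq_Cons_trans[OF z2' peq_Cons[OF r2']]]])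
    also have "peq \<dots> (c # a # b # c # b # R3)" using far_sym[OF fab] by (intro peq_Cons peq_far_swap)
    also have "peq \<dots> (c # a # c # b # c # R3)" using adj_sym[OF acb] by (intro peq_Cons peq_braid)
    also have "peq \<dots> (a # c # a # b # c # R3)" using adj_sym[OF aac] by (rule peq_braid)
    also have "peq \<dots> (a # c # b # a # c # R3)" using fab by (intro peq_Cons peq_far_swap)
    finally show ?thesis by (rule lcm_split_farI[OF fab X])
  qed
qed

lemma lcm_split_trans:
  assumes IH: "\<And>a b X' Y'. length X' < length X \<Longrightarrow> peq (a # X') (b # Y') \<Longrightarrow> lcm_split a b X' Y'"
    and ac: "lcm_split a c X V" and cb: "lcm_split c b V Y"
  shows "lcm_split a b X Y"
proof -
  consider "a = c" | "c = b" | "a \<noteq> c" "c \<noteq> b" by blast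
  then show ?thesis
  proof cases
    case 1 then show ?thesis using ac cb lcm_split_peq_left lcm_split_same by blast
  next
    case 2 then show ?thesis using ac cb lcm_split_peq_right lcm_split_same by blast
  next
    case 3
    have ac': "(far a c \<and> (\<exists>Z. peq X (c # Z) \<and> peq V (a # Z))) \<or>
        (adj a c \<and> (\<exists>Z. peq X (c # a # Z) \<and> peq V (a # c # Z)))"
      using ac 3 unfolding lcm_split_def by blast
    have cb': "(far c b \<and> (\<exists>Z. peq V (b # Z) \<and> peq Y (c # Z))) \<or>
        (adj c b \<and> (\<exists>Z. peq V (b # c # Z) \<and> peq Y (c # b # Z)))"
      using cb 3 unfolding lcm_split_def by blast
    from ac' show ?thesis
    proof
      assume "far a c \<and> (\<exists>Z. peq X (c # Z) \<and> peq V (a # Z))"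
      then obtain Z1 where fac: "far a c" and x: "peq X (c # Z1)" and v: "peq V (a # Z1)" by blast
      have len: "length Z1 < length X" using peq_length[OF x] by simp
      from cb' show ?thesis
      proof
        assume "far c b \<and> (\<exists>Z. peq V (b # Z) \<and> peq Y (c # Z))"
        then obtain Z2 where "far c b" "peq V (b # Z2)" "peq Y (c # Z2)" by blast
        then show ?thesis by (metis lcm_split_far_far[OF IH len fac _ x] peq_trans peq_sym v)
      next
        assume "adj c b \<and> (\<exists>Z. peq V (b # c # Z) \<and> peq Y (c # b # Z))"
        then obtain Z2 where "adj c b" "peq V (b # c # Z2)" "peq Y (c # b # Z2)" by blast
        then show ?thesis by (metis lcm_split_far_adj[OF IH len fac _ x] peq_trans peq_sym v)
      qed
    next
      assume "adj a c \<and> (\<exists>Z. peq X (c # a # Z) \<and> peq V (a # c # Z))"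
      then obtain Z1 where aac: "adj a c" and x: "peq X (c # a # Z1)" and v: "peq V (a # c # Z1)" by blast
      have len: "length (c # Z1) < length X" using peq_length[OF x] by simp
      from cb' show ?thesis
      proof
        assume "far c b \<and> (\<exists>Z. peq V (b # Z) \<and> peq Y (c # Z))"
        then obtain Z2 where "far c b" "peq V (b # Z2)" "peq Y (c # Z2)" by blast
        then show ?thesis by (metis lcm_split_adj_far[OF IH len aac _ x] peq_trans peq_sym v)
      next
        assume "adj c b \<and> (\<exists>Z. peq V (b # c # Z) \<and> peq Y (c # b # Z))"
        then obtain Z2 where "adj c b" "peq V (b # c # Z2)" "peq Y (c # b # Z2)" by blast
        then show ?thesis by (metis lcm_split_adj_adj[OF IH len aac _ x] peq_trans peq_sym v)
      qed
    qed
  qed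
qed

theorem peq_Cons_lcm_split: "peq (a # X) (b # Y) \<Longrightarrow> lcm_split a b X Y"
proof (induction "length X" arbitrary: a b X Y rule: less_induct)
  case less
  have "lcm_split a c X V" if "peq (a # X) W" "W = c # V" for W c V
    using that
  proof (induction arbitrary: c V rule: rtranclp_induct)
    case base then show ?case by (auto simp: lcm_split_def)
  next
    case (step W W')
    obtain c0 V0 where W: "W = c0 # V0"
      using braid_step_length[OF step.hyps(2)] step.prems by (cases W) auto
    have "lcm_split a c0 X V0" using step.IH W by blast
    moreover have "lcm_split c0 c V0 V" using lcm_split_braid_step step.hyps(2) W step.prems by blast
    ultimately show ?case using lcm_split_trans less.hyps by blast
  qed
  then show ?case using less.prems by blast
qed

lemma peq_Cons_cancel: "peq (c # X) (c # Y) \<Longrightarrow> peq X Y"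
  using peq_Cons_lcm_split lcm_split_same by blast

lemma peq_left_cancel: "peq (w @ X) (w @ Y) \<Longrightarrow> peq X Y"
  by (induction w) (auto dest: peq_Cons_cancel)

section \<open>Reduced words\<close>

definition perm_of :: "nat list \<Rightarrow> nat list" where
  "perm_of w = foldl (\<lambda>p i. swap_pos i p) perm_id w"

lemma length_5_cases: "length p = 5 \<Longrightarrow> \<exists>a b c d e. p = [a,b,c,d,e]"
  by (cases p; cases "tl p"; cases "tl (tl p)"; cases "tl (tl (tl p))"; cases "tl (tl (tl (tl p)))") auto

lemma set_swap_pos: "set (swap_pos i p) = set p"
  by (cases "(i,p)" rule: swap_pos.cases) auto

lemma distinct_swap_pos: "distinct (swap_pos i p) = distinct p"
  by (cases "(i,p)" rule: swap_pos.cases) auto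

lemma is_perm5_length: "is_perm5 p \<Longrightarrow> length p = 5"
proof -
  assume "is_perm5 p"
  then have "card (set p) = length p" "card (set p) = 5"
    unfolding is_perm5_def by (metis distinct_card, simp)
  then show ?thesis by simp
qed

lemma is_perm5_swap_pos: "is_perm5 p \<Longrightarrow> is_perm5 (swap_pos i p)"
  unfolding is_perm5_def using set_swap_pos distinct_swap_pos by simp

lemma perm_of_Nil: "perm_of [] = perm_id" by (simp add: perm_of_def)

lemma perm_of_snoc: "perm_of (w @ [i]) = swap_pos i (perm_of w)"
  by (simp add: perm_of_def)

lemma is_perm5_perm_of: "is_perm5 (perm_of w)"
proof (induction w rule: rev_induct)
  case Nil then show ?case by (simp add: perm_of_Nil is_perm5_def perm_id_def)
qed (simp add: perm_of_snoc is_perm5_swap_pos)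

lemma length_perm_of: "length (perm_of w) = 5"
  using is_perm5_length is_perm5_perm_of by blast

lemma swap_pos_perm_comp: "length p = 5 \<Longrightarrow> swap_pos i p = perm_comp p (swap_pos i perm_id)"
  by (drule length_5_cases) (auto simp: perm_comp_def perm_id_def)

lemma perm_comp_id: "length p = 5 \<Longrightarrow> perm_comp p perm_id = p"
  by (drule length_5_cases) (auto simp: perm_comp_def perm_id_def)

lemma perm_of_append: "perm_of (u @ v) = perm_comp (perm_of u) (perm_of v)"
proof (induction v rule: rev_induct)
  case Nil thus ?case by (simp add: perm_of_Nil perm_comp_id length_perm_of)
next
  case (snoc i v)
  have "perm_of (u @ v @ [i]) = perm_comp (perm_of (u @ v)) (swap_pos i perm_id)"
    using perm_of_snoc[of "u @ v"] swap_pos_perm_comp[OF length_perm_of] by simp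
  also have "\<dots> = perm_comp (perm_of u) (perm_comp (perm_of v) (swap_pos i perm_id))"
    using set_swap_pos[of i perm_id] length_perm_of[of v] by (auto simp: snoc perm_comp_def perm_id_def)
  also have "\<dots> = perm_comp (perm_of u) (perm_of (v @ [i]))"
    by (simp add: perm_of_snoc swap_pos_perm_comp length_perm_of)
  finally show ?case by simp
qed

lemma perm_of_Cons: "perm_of (a # u) = swap_val a (perm_of u)"
proof -
  have "perm_of (a # u) = perm_comp (swap_pos a perm_id) (perm_of u)"
    using perm_of_append[of "[a]" u] by (simp add: perm_of_def)
  moreover have "set (perm_of u) \<subseteq> {0,1,2,3,4}" using is_perm5_perm_of[of u] by (simp add: is_perm5_def)
  ultimately show ?thesis
    by (cases "a \<in> {1,2,3,4}")
       (auto simp: perm_comp_def swap_val_def perm_id_def swap_pos_out intro!: map_cong map_idI)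
qed

lemma swap_val_swap_val: "swap_val a (swap_val a q) = q"
  by (auto simp: swap_val_def intro!: map_idI)

lemma perm_of_far: "far i j \<Longrightarrow> perm_of [i,j] = perm_of [j,i]"
  by (auto simp: far_def perm_of_def perm_id_def)

lemma perm_of_adj: "adj i j \<Longrightarrow> perm_of [i,j,i] = perm_of [j,i,j]"
  by (auto simp: adj_def perm_of_def perm_id_def)

lemma perm_of_braid_step: "braid_step u v \<Longrightarrow> perm_of u = perm_of v"
proof (induction rule: braid_step.induct)
  case (far_swap i j xs ys)
  then show ?case using perm_of_far[OF far_swap] perm_of_append[of xs] perm_of_append[of "[i,j]" ys]
      perm_of_append[of "[j,i]" ys] by (metis append_Cons append_Nil)
next
  case (braid i j xs ys)
  then show ?case using perm_of_adj[OF braid] perm_of_append[of xs] perm_of_append[of "[i,j,i]" ys]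
      perm_of_append[of "[j,i,j]" ys] by (metis append_Cons append_Nil)
qed

lemma perm_of_peq: "peq u v \<Longrightarrow> perm_of u = perm_of v"
  by (induction rule: rtranclp_induct) (auto dest: perm_of_braid_step)

lemma inversions_perm_of_append_le: "inversions (perm_of (u @ v)) \<le> inversions (perm_of u) + length v"
proof (induction v rule: rev_induct)
  case (snoc i v)
  then show ?case
    using inversions_swap_pos_le[OF is_perm5_perm_of, of i "u @ v"] perm_of_snoc[of "u @ v" i] by simp
qed simp

lemma inversions_perm_of_append_le': "inversions (perm_of (u @ v)) \<le> length u + inversions (perm_of v)"
proof (induction u)
  case (Cons a u)
  then show ?case
    using inversions_swap_val_le[OF is_perm5_perm_of, of a "u @ v"] by (simp add: perm_of_Cons)
qed simp

lemma inversions_perm_of_le: "inversions (perm_of w) \<le> length w"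
  using inversions_perm_of_append_le[of "[]" w] by (simp add: perm_of_Nil perm_id_def)

definition reduced :: "nat list \<Rightarrow> bool" where
  "reduced w \<longleftrightarrow> inversions (perm_of w) = length w"

lemma reduced_peq: "peq u v \<Longrightarrow> reduced u \<Longrightarrow> reduced v"
  unfolding reduced_def using perm_of_peq peq_length by metis

lemma reduced_appendD: "reduced (u @ v) \<Longrightarrow> reduced u \<and> reduced v"
  unfolding reduced_def
  using inversions_perm_of_append_le[of u v] inversions_perm_of_append_le'[of u v]
    inversions_perm_of_le[of u] inversions_perm_of_le[of v]
  by simp

lemma reduced_Cons:
  assumes "reduced (a # u)"
  shows "reduced u" "left_descent a (perm_of (a # u))" "1 \<le> a" "a \<le> 4"
proof -
  show "reduced u" using reduced_appendD[of "[a]" u] assms by simp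
  have less: "inversions (perm_of u) < inversions (perm_of (a # u))"
    using assms inversions_perm_of_le[of u] by (simp add: reduced_def)
  then show "left_descent a (perm_of (a # u))"
    unfolding left_descent_def by (simp add: perm_of_Cons swap_val_swap_val)
  show "1 \<le> a" "a \<le> 4" using less swap_val_out[of a "perm_of u"] perm_of_Cons[of a u] by fastforce+
qed

definition delta_word :: "nat list" where "delta_word = [1,2,3,4,1,2,3,1,2,1]"

lemma perm_of_delta_word: "perm_of delta_word = perm_longest"
  by (simp add: perm_of_def perm_id_def perm_longest_def delta_word_def)

lemma inversions_longest: "inversions perm_longest = 10" by (simp add: perm_longest_def)
lemma length_delta_word: "length delta_word = 10" by (simp add: delta_word_def)
lemma reduced_delta_word: "reduced delta_word"
  by (simp add: reduced_def perm_of_delta_word inversions_longest length_delta_word)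

lemma reduced_left_descent:
  "reduced W \<Longrightarrow> left_descent a (perm_of W) \<Longrightarrow> 1 \<le> a \<Longrightarrow> a \<le> 4 \<Longrightarrow> \<exists>U. peq W (a # U)"
proof (induction "length W" arbitrary: W a rule: less_induct)
  case less
  show ?case
  proof (cases W)
    case Nil thus ?thesis using less.prems gen_perm_id by (simp add: perm_of_Nil)
  next
    case (Cons b U)
    have rU: "reduced U" and bS: "left_descent b (perm_of W)" and b: "1 \<le> b" "b \<le> 4"
      using reduced_Cons less.prems(1) Cons by auto
    show ?thesis
    proof (cases "b = a")
      case True thus ?thesis using Cons by blast
    next
      case False
      have pU: "perm_of U = swap_val b (perm_of W)" using Cons by (simp add: perm_of_Cons swap_val_swap_val)
      note desc = left_descents_swap_val[OF is_perm5_perm_of less.prems(3,4) b not_sym[OF False] less.prems(2) bS]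
      obtain U1 where u1: "peq U (a # U1)"
        using less.hyps[of U a] rU desc(1) pU less.prems(3,4) Cons by auto
      have "far b a \<or> adj b a" using far_or_adj[of b a] b less.prems(3,4) False by auto
      thus ?thesis
      proof
        assume "far b a"
        then have "peq (b # a # U1) (a # b # U1)" by (rule peq_far_swap)
        then show ?thesis using peq_trans[OF peq_Cons[OF u1, of b]] Cons by blast
      next
        assume aba: "adj b a"
        have "perm_of U1 = swap_val a (perm_of U)"
          using perm_of_peq[OF u1] by (simp add: perm_of_Cons swap_val_swap_val)
        then have bU1: "left_descent b (perm_of U1)" using desc(2) adj_sym[OF aba] pU by simp
        have rU1: "reduced U1" using reduced_Cons(1) reduced_peq[OF u1 rU] by blast
        have "length U1 < length W" using peq_length[OF u1] Cons by simp
        then obtain U2 where u2: "peq U1 (b # U2)" using less.hyps[of U1 b] rU1 bU1 b by blast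
        have "peq W (b # a # b # U2)"
          using peq_Cons_trans[OF peq_Cons[OF u1, of b] peq_Cons[OF u2, of a]] Cons by simp
        also have "peq \<dots> (a # b # a # U2)" using aba by (rule peq_braid)
        finally show ?thesis by blast
      qed
    qed
  qed
qed

lemma reduced_peq_same_perm: "reduced W \<Longrightarrow> reduced W' \<Longrightarrow> perm_of W = perm_of W' \<Longrightarrow> peq W W'"
proof (induction "length W" arbitrary: W W' rule: less_induct)
  case less
  show ?case
  proof (cases W)
    case Nil
    then have "inversions (perm_of W') = 0" using less.prems(3) by (simp add: perm_of_Nil perm_id_def flip: less.prems(3))
    then show ?thesis using Nil less.prems(2) by (simp add: reduced_def)
  next
    case (Cons a U)
    have rU: "reduced U" and aS: "left_descent a (perm_of W)" and a: "1 \<le> a" "a \<le> 4"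
      using reduced_Cons less.prems(1) Cons by auto
    obtain U' where u': "peq W' (a # U')"
      using reduced_left_descent[OF less.prems(2)] aS less.prems(3) a by auto
    have rU': "reduced U'" using reduced_Cons(1) reduced_peq[OF u' less.prems(2)] by blast
    have "perm_of U' = swap_val a (perm_of W')"
      using perm_of_peq[OF u'] by (simp add: perm_of_Cons swap_val_swap_val)
    also have "\<dots> = perm_of U" by (simp add: Cons perm_of_Cons swap_val_swap_val flip: less.prems(3))
    finally have "peq U U'" using less.hyps[of U U'] Cons rU rU' by simp
    then have "peq W (a # U')" using Cons by (simp add: peq_Cons)
    then show ?thesis using peq_trans[OF _ peq_sym[OF u']] by blast
  qed
qed

section \<open>Simple words and joins\<close>

definition simple_word :: "nat list \<Rightarrow> bool" where
  "simple_word W \<longleftrightarrow> (\<exists>Z. peq (W @ Z) delta_word)"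

lemma simple_word_reduced: "simple_word W \<Longrightarrow> reduced W"
proof -
  assume "simple_word W"
  then obtain Z where z: "peq (W @ Z) delta_word" by (auto simp: simple_word_def)
  have "perm_of (W @ Z) = perm_longest" using perm_of_peq[OF z] perm_of_delta_word by simp
  moreover have "length W + length Z = 10" using peq_length[OF z] length_delta_word by simp
  ultimately show ?thesis
    using inversions_perm_of_append_le[of W Z] inversions_perm_of_le[of W] inversions_longest
    by (simp add: reduced_def)
qed

lemma reduced_simple_word: "reduced W \<Longrightarrow> simple_word W"
proof (induction "10 - length W" arbitrary: W rule: less_induct)
  case less
  show ?case
  proof (cases "perm_of W = perm_longest")
    case True
    then have "peq (W @ []) delta_word"
      using reduced_peq_same_perm[OF less.prems reduced_delta_word] perm_of_delta_word by simp
    then show ?thesis unfolding simple_word_def by blast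
  next
    case False
    then obtain j where j: "inversions (swap_pos j (perm_of W)) = inversions (perm_of W) + 1"
      using right_ascent_exists[OF is_perm5_perm_of] by blast
    have r: "reduced (W @ [j])" using less.prems j by (simp add: reduced_def perm_of_snoc)
    have "length (W @ [j]) \<le> 10" using r inversions_le_10[OF is_perm5_perm_of] by (metis reduced_def)
    then obtain Z where "peq ((W @ [j]) @ Z) delta_word"
      using less.hyps[of "W @ [j]"] r unfolding simple_word_def by fastforce
    then show ?thesis unfolding simple_word_def by (metis append_assoc)
  qed
qed

lemma delta_word_gen_prefix: "1 \<le> i \<Longrightarrow> i \<le> 4 \<Longrightarrow> \<exists>X. peq delta_word (i # X)"
  using reduced_left_descent[OF reduced_delta_word] left_descent_longest perm_of_delta_word by simp

text \<open>\<open>u\<close> is a common right multiple of \<open>W\<close> and \<open>\<sigma>\<^sub>i\<close> dividing \<open>M\<close>, and its permutation is the join.\<close>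

definition join_prefix :: "nat list \<Rightarrow> nat list \<Rightarrow> nat \<Rightarrow> bool" where
  "join_prefix M W i \<longleftrightarrow>
     (\<exists>u Y v. reduced u \<and> perm_of u = join_gen (perm_of W) i \<and> peq M (u @ Y) \<and> peq u (W @ v))"

lemma join_prefix_Cons_far:
  assumes W: "reduced (a # W')" and fai: "far a i" and ndesc: "\<not> left_descent i (perm_of (a # W'))"
    and J: "join_prefix M' W' i" and M: "peq M (a # M')"
  shows "join_prefix M (a # W') i"
proof -
  obtain u Y v where u: "reduced u" "perm_of u = join_gen (perm_of W') i" "peq M' (u @ Y)" "peq u (W' @ v)"
    using J unfolding join_prefix_def by blast
  have a: "1 \<le> a" "a \<le> 4" "left_descent a (perm_of (a # W'))" using reduced_Cons W by auto
  have sw: "swap_val a (perm_of (a # W')) = perm_of W'" by (simp add: perm_of_Cons swap_val_swap_val)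
  have i: "1 \<le> i" "i \<le> 4" "a \<noteq> i" using fai by (auto simp: far_def)
  have "a + 2 \<le> i \<or> i + 2 \<le> a" using fai by (auto simp: far_def)
  from join_gen_recursion[OF is_perm5_perm_of i(1,2) a(1,2) i(3) a(3) ndesc, unfolded join_gen_recursion_def
      Let_def sw if_P[OF this]]
  have J: "join_gen (perm_of (a # W')) i = swap_val a (join_gen (perm_of W') i)"
      "inversions (join_gen (perm_of (a # W')) i) = inversions (join_gen (perm_of W') i) + 1"
    by blast+
  have "perm_of (a # u) = join_gen (perm_of (a # W')) i" using J u(2) by (simp add: perm_of_Cons)
  moreover have "reduced (a # u)" using J u(1,2) by (simp add: reduced_def perm_of_Cons)
  moreover have "peq M ((a # u) @ Y)" using peq_Cons_trans[OF M u(3)] by simp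
  moreover have "peq (a # u) ((a # W') @ v)" using peq_Cons[OF u(4)] by simp
  ultimately show ?thesis unfolding join_prefix_def by blast
qed

lemma join_prefix_Cons_adj:
  assumes IH: "\<And>M W Y Z i. length M < n \<Longrightarrow> reduced W \<Longrightarrow> peq M (W @ Y) \<Longrightarrow> peq M (i # Z) \<Longrightarrow>
      1 \<le> i \<Longrightarrow> i \<le> 4 \<Longrightarrow> join_prefix M W i"
    and W: "reduced (a # W')" and aai: "adj a i" and ndesc: "\<not> left_descent i (perm_of (a # W'))"
    and J: "join_prefix M' W' i" and M: "peq M (a # M')" and M': "peq M' (i # a # Z)" and len: "length M' < n"
  shows "join_prefix M (a # W') i"
proof -
  obtain u Y v where u: "reduced u" "perm_of u = join_gen (perm_of W') i" "peq M' (u @ Y)" "peq u (W' @ v)"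
    using J unfolding join_prefix_def by blast
  have a: "1 \<le> a" "a \<le> 4" "left_descent a (perm_of (a # W'))" using reduced_Cons W by auto
  have sw: "swap_val a (perm_of (a # W')) = perm_of W'" by (simp add: perm_of_Cons swap_val_swap_val)
  have i: "1 \<le> i" "i \<le> 4" "a \<noteq> i" using aai by (auto simp: adj_def)
  have "\<not> (a + 2 \<le> i \<or> i + 2 \<le> a)" using aai by (auto simp: adj_def)
  from join_gen_recursion[OF is_perm5_perm_of i(1,2) a(1,2) i(3) a(3) ndesc, unfolded join_gen_recursion_def
      Let_def sw if_not_P[OF this] u(2)[symmetric]]
  have J: "left_descent i (perm_of u)"
      "join_gen (perm_of (a # W')) i = swap_val a (swap_val i (join_gen (swap_val i (perm_of u)) a))"
      "inversions (join_gen (perm_of (a # W')) i) = inversions (join_gen (swap_val i (perm_of u)) a) + 2"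
    by blast+
  obtain u' where u': "peq u (i # u')" using reduced_left_descent[OF u(1) J(1) i(1,2)] by blast
  have ru': "reduced u'" using reduced_Cons(1) reduced_peq[OF u' u(1)] by blast
  have pu': "perm_of u' = swap_val i (perm_of u)"
    using perm_of_peq[OF u'] by (simp add: perm_of_Cons swap_val_swap_val)
  have M'': "peq M' (i # u' @ Y)" using peq_trans[OF u(3) peq_append_right[OF u']] by simp
  have Ma: "peq (u' @ Y) (a # Z)" using peq_Cons_cancel[OF peq_trans[OF peq_sym[OF M''] M']] .
  have lenY: "length (u' @ Y) < n" using peq_length[OF M''] len by simp
  obtain u3 Y3 v3 where u3: "reduced u3" "perm_of u3 = join_gen (perm_of u') a"
      "peq (u' @ Y) (u3 @ Y3)" "peq u3 (u' @ v3)"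
    using IH[OF lenY ru' rtranclp.rtrancl_refl Ma a(1,2)] unfolding join_prefix_def by blast
  have "peq (i # u3) (i # u' @ v3)" using peq_Cons[OF u3(4)] .
  also have "peq \<dots> (u @ v3)" using peq_sym[OF peq_append_right[OF u', of v3]] by simp
  also have "peq \<dots> (W' @ v @ v3)" using peq_append_right[OF u(4), of v3] by simp
  finally have "peq (i # u3) (W' @ v @ v3)" .
  then have mult: "peq (a # i # u3) ((a # W') @ v @ v3)" using peq_Cons by simp
  have P: "perm_of (a # i # u3) = join_gen (perm_of (a # W')) i" using J(2) u3(2) pu' by (simp add: perm_of_Cons)
  moreover have "reduced (a # i # u3)"
    using u3(1,2) pu' unfolding reduced_def P J(3) by simp
  moreover have "peq M ((a # i # u3) @ Y3)"
    using peq_Cons_trans[OF M peq_Cons_trans[OF M'' u3(3)]] by simp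
  ultimately show ?thesis using mult unfolding join_prefix_def by blast
qed

lemma join_prefix:
  "reduced W \<Longrightarrow> peq M (W @ Y) \<Longrightarrow> peq M (i # Z) \<Longrightarrow> 1 \<le> i \<Longrightarrow> i \<le> 4 \<Longrightarrow> join_prefix M W i"
proof (induction "length M" arbitrary: M W Y Z i rule: less_induct)
  case less
  note W = less.prems(1) and MW = less.prems(2) and Mi = less.prems(3) and i = less.prems(4,5)
  show ?case
  proof (cases "left_descent i (perm_of W)")
    case True
    then have "join_gen (perm_of W) i = perm_of W" by (simp add: join_gen_def)
    then show ?thesis using W MW unfolding join_prefix_def by (metis append_Nil2 rtranclp.rtrancl_refl)
  next
    case ndesc: False
    show ?thesis
    proof (cases W)
      case Nil
      have "reduced [i]" "perm_of [i] = join_gen (perm_of W) i"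
        using gen_perm_id[OF i] Nil by (simp_all add: reduced_def perm_of_def perm_of_Nil)
      moreover have "peq M ([i] @ Z)" "peq [i] (W @ [i])" using Mi Nil by simp_all
      ultimately show ?thesis unfolding join_prefix_def by blast
    next
      case (Cons a W')
      have W': "reduced W'" and a: "1 \<le> a" "a \<le> 4" "left_descent a (perm_of W)"
        using reduced_Cons W Cons by auto
      have MW': "peq M (a # W' @ Y)" using MW Cons by simp
      have len: "length (W' @ Y) < length M" using peq_length[OF MW] Cons by simp
      have split: "lcm_split a i (W' @ Y) Z" using peq_Cons_lcm_split[OF peq_trans[OF peq_sym[OF MW'] Mi]] .
      have "a \<noteq> i" using a(3) ndesc by blast
      then consider "far a i" | "adj a i" using far_or_adj a(1,2) i by blast
      then show ?thesis
      proof cases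
        case 1
        then obtain X where "peq (W' @ Y) (i # X)" using lcm_split_far split by blast
        then have "join_prefix (W' @ Y) W' i" using less.hyps[OF len W' rtranclp.rtrancl_refl _ i] by blast
        then show ?thesis using join_prefix_Cons_far[OF _ 1 _ _ MW'] W ndesc Cons by simp
      next
        case 2
        then obtain X where X: "peq (W' @ Y) (i # a # X)" using lcm_split_adj split by blast
        then have "join_prefix (W' @ Y) W' i" using less.hyps[OF len W' rtranclp.rtrancl_refl _ i] by blast
        then show ?thesis using join_prefix_Cons_adj[OF less.hyps _ 2 _ _ MW' X len] W ndesc Cons by simp
      qed
    qed
  qed
qed

section \<open>Normal chains\<close>

definition proper_simple :: "nat list \<Rightarrow> bool" where
  "proper_simple W \<longleftrightarrow> simple_word W \<and> W \<noteq> [] \<and> \<not> peq W delta_word"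

definition left_weighted_word :: "nat list \<Rightarrow> nat list \<Rightarrow> bool" where
  "left_weighted_word W1 W2 \<longleftrightarrow> (\<forall>m Z y. peq W2 (m # Z) \<longrightarrow> \<not> peq (W1 @ m # y) delta_word)"

fun normal_chain :: "nat list list \<Rightarrow> bool" where
  "normal_chain [] = True"
| "normal_chain [W] = proper_simple W"
| "normal_chain (W1 # W2 # Ws) = (proper_simple W1 \<and> left_weighted_word W1 W2 \<and> normal_chain (W2 # Ws))"

lemma normal_chain_Cons:
  "normal_chain (W # Ws) \<longleftrightarrow> proper_simple W \<and> (Ws \<noteq> [] \<longrightarrow> left_weighted_word W (hd Ws)) \<and> normal_chain Ws"
  by (cases Ws) auto

lemma normal_chain_snoc:
  "normal_chain (Xs @ [W]) \<longleftrightarrow> normal_chain Xs \<and> proper_simple W \<and> (Xs \<noteq> [] \<longrightarrow> left_weighted_word (last Xs) W)"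
  by (induction Xs rule: normal_chain.induct) auto

lemma normal_chain_proper_simple: "normal_chain Ws \<Longrightarrow> W \<in> set Ws \<Longrightarrow> proper_simple W"
  by (induction Ws rule: normal_chain.induct) auto

lemma normal_chain_nth:
  "normal_chain Ws \<longleftrightarrow> (\<forall>W\<in>set Ws. proper_simple W) \<and>
     (\<forall>i. Suc i < length Ws \<longrightarrow> left_weighted_word (Ws ! i) (Ws ! Suc i))"
proof (induction Ws rule: normal_chain.induct)
  case (3 W1 W2 Ws)
  show ?case
  proof
    assume "normal_chain (W1 # W2 # Ws)"
    then show "(\<forall>W\<in>set (W1 # W2 # Ws). proper_simple W) \<and>
        (\<forall>i. Suc i < length (W1 # W2 # Ws) \<longrightarrow> left_weighted_word ((W1 # W2 # Ws) ! i) ((W1 # W2 # Ws) ! Suc i))"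
      using 3 by (auto simp: less_Suc_eq_0_disj)
  next
    assume h: "(\<forall>W\<in>set (W1 # W2 # Ws). proper_simple W) \<and>
        (\<forall>i. Suc i < length (W1 # W2 # Ws) \<longrightarrow> left_weighted_word ((W1 # W2 # Ws) ! i) ((W1 # W2 # Ws) ! Suc i))"
    then have "left_weighted_word W1 W2" by (metis Suc_less_eq length_Cons nth_Cons_0 nth_Cons_Suc zero_less_Suc)
    moreover have "normal_chain (W2 # Ws)" using 3 h by fastforce
    ultimately show "normal_chain (W1 # W2 # Ws)" using h by simp
  qed
qed auto

text \<open>If \<open>\<sigma>\<^sub>i\<close> divides \<open>W M\<close> but not \<open>W\<close>, then \<open>W\<close> can be extended inside \<open>\<Delta>\<close> by a
  first letter of \<open>M\<close>: a simple factor whose product with its successor has a new prefix is not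
  left-weighted.\<close>

lemma gen_prefix_extends_simple:
  assumes W: "reduced W" "W \<noteq> []" and WM: "peq (W @ M) (i # Z)" and nprefix: "\<nexists>Z'. peq W (i # Z')"
  obtains j M' Z' where "peq M (j # M')" "peq (W @ j # Z') delta_word"
proof -
  obtain a W1 where W1: "W = a # W1" using W(2) by (cases W) auto
  have "a \<noteq> i" using nprefix W1 by blast
  moreover have "lcm_split a i (W1 @ M) Z" using peq_Cons_lcm_split WM W1 by simp
  ultimately have "far a i \<or> adj a i" unfolding lcm_split_def by blast
  then have i: "1 \<le> i" "i \<le> 4" by (auto simp: far_def adj_def)
  have ndesc: "\<not> left_descent i (perm_of W)" using reduced_left_descent[OF W(1) _ i] nprefix by blast
  obtain u Y v where u: "reduced u" "perm_of u = join_gen (perm_of W) i" "peq (W @ M) (u @ Y)" "peq u (W @ v)"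
    using join_prefix[OF W(1) rtranclp.rtrancl_refl WM i] unfolding join_prefix_def by blast
  have "v \<noteq> []"
  proof
    assume "v = []"
    then have "perm_of u = perm_of W" using perm_of_peq[OF u(4)] by simp
    then show False using u(2) join_gen_ne[OF is_perm5_perm_of i ndesc] by simp
  qed
  then obtain j v' where v: "v = j # v'" by (cases v) auto
  have "peq (W @ M) (W @ j # v' @ Y)" using peq_trans[OF u(3) peq_append_right[OF u(4)]] v by simp
  then have "peq M (j # v' @ Y)" by (rule peq_left_cancel)
  moreover obtain Z3 where "peq (u @ Z3) delta_word" using reduced_simple_word[OF u(1)] by (auto simp: simple_word_def)
  then have "peq (W @ j # v' @ Z3) delta_word"
    using peq_trans[OF peq_sym[OF peq_append_right[OF u(4), of Z3]]] v by simp
  ultimately show ?thesis using that by blast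
qed

lemma normal_chain_gen_prefix:
  "normal_chain (W # Ws) \<Longrightarrow> peq (W @ concat Ws) (i # Z) \<Longrightarrow> \<exists>Z'. peq W (i # Z')"
proof (induction Ws arbitrary: W i Z)
  case (Cons W2 Ws)
  have W: "reduced W" "W \<noteq> []" "left_weighted_word W W2" "normal_chain (W2 # Ws)"
    using Cons.prems(1) simple_word_reduced by (auto simp: proper_simple_def normal_chain_Cons)
  show ?case
  proof (rule ccontr)
    assume "\<nexists>Z'. peq W (i # Z')"
    then obtain j M' Z' where "peq (W2 @ concat Ws) (j # M')" "peq (W @ j # Z') delta_word"
      using gen_prefix_extends_simple[OF W(1,2)] Cons.prems(2) by (metis concat.simps(2))
    moreover obtain Z2 where "peq W2 (j # Z2)" using Cons.IH[OF W(4)] calculation(1) by blast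
    ultimately show False using W(3) unfolding left_weighted_word_def by blast
  qed
qed auto

lemma normal_chain_no_delta_prefix: "normal_chain Ws \<Longrightarrow> \<not> peq (concat Ws) (delta_word @ Y)"
proof
  assume ch: "normal_chain Ws" and h: "peq (concat Ws) (delta_word @ Y)"
  show False
  proof (cases Ws)
    case Nil then show False using peq_length[OF h] length_delta_word by simp
  next
    case (Cons W Ws')
    have W: "proper_simple W" "reduced W"
      using normal_chain_proper_simple[OF ch] simple_word_reduced Cons by (auto simp: proper_simple_def)
    have "left_descent a (perm_of W)" if a: "1 \<le> a" "a \<le> 4" for a
    proof -
      obtain X where "peq delta_word (a # X)" using delta_word_gen_prefix a by blast
      then have "peq (W @ concat Ws') (a # X @ Y)" using peq_trans[OF h peq_append_right] Cons by fastforce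
      then obtain Z' where z: "peq W (a # Z')" using normal_chain_gen_prefix ch Cons by blast
      show ?thesis using reduced_Cons(2)[OF reduced_peq[OF z W(2)]] perm_of_peq[OF z] by simp
    qed
    then have "perm_of W = perm_longest" using all_left_descents_longest[OF is_perm5_perm_of] by blast
    then have "peq W delta_word" using reduced_peq_same_perm[OF W(2) reduced_delta_word] perm_of_delta_word by simp
    then show False using W(1) by (simp add: proper_simple_def)
  qed
qed

section \<open>Conjugation by \<open>\<Delta>\<close> and complements\<close>

text \<open>\<open>flip\<close> is conjugation by \<open>\<Delta>\<close>: \<open>\<sigma>\<^sub>i \<mapsto> \<sigma>\<^sub>5\<^sub>-\<^sub>i\<close>.\<close>

definition flip :: "nat list \<Rightarrow> nat list" where "flip w = map (\<lambda>i. 5 - i) w"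
definition flip_pow :: "nat \<Rightarrow> nat list \<Rightarrow> nat list" where "flip_pow k w = (if even k then w else flip w)"
definition gen_word :: "nat list \<Rightarrow> bool" where "gen_word w \<longleftrightarrow> set w \<subseteq> {1,2,3,4}"
definition delta_word_pow :: "nat \<Rightarrow> nat list" where "delta_word_pow k = concat (replicate k delta_word)"

lemma flip_append: "flip (u @ v) = flip u @ flip v" by (simp add: flip_def)
lemma flip_Cons: "flip (a # v) = (5 - a) # flip v" by (simp add: flip_def)
lemma gen_word_append: "gen_word (u @ v) \<longleftrightarrow> gen_word u \<and> gen_word v" by (auto simp: gen_word_def)
lemma flip_flip: "gen_word w \<Longrightarrow> flip (flip w) = w" by (auto simp: flip_def gen_word_def intro!: map_idI)
lemma gen_word_flip: "gen_word w \<Longrightarrow> gen_word (flip w)" by (auto simp: flip_def gen_word_def)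
lemma gen_word_concat: "(\<And>W. W \<in> set L \<Longrightarrow> gen_word W) \<Longrightarrow> gen_word (concat L)"
  by (induction L) (auto simp: gen_word_def)

lemma braid_step_flip: "braid_step u v \<Longrightarrow> braid_step (flip u) (flip v)"
proof (induction rule: braid_step.induct)
  case (far_swap i j xs ys)
  have "far (5 - i) (5 - j)" using far_swap by (auto simp: far_def)
  then show ?case using braid_step.far_swap[of "5 - i" "5 - j" "flip xs" "flip ys"] by (simp add: flip_def)
next
  case (braid i j xs ys)
  have "adj (5 - i) (5 - j)" using braid by (auto simp: adj_def)
  then show ?case using braid_step.braid[of "5 - i" "5 - j" "flip xs" "flip ys"] by (simp add: flip_def)
qed

lemma peq_flip: "peq u v \<Longrightarrow> peq (flip u) (flip v)"
  by (induction rule: rtranclp_induct) (auto intro: rtranclp.rtrancl_into_rtrancl braid_step_flip)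

lemma braid_step_set: "braid_step u v \<Longrightarrow> set u = set v"
  by (induction rule: braid_step.induct) auto

lemma peq_gen_word: "peq u v \<Longrightarrow> gen_word u \<Longrightarrow> gen_word v"
  unfolding gen_word_def by (induction rule: rtranclp_induct) (auto dest: braid_step_set)

lemma reduced_gen_word: "reduced w \<Longrightarrow> gen_word w"
proof (induction w)
  case (Cons a w)
  then have "reduced w" "a \<in> {1,2,3,4}" using reduced_Cons[OF Cons.prems] by auto
  then show ?case using Cons.IH by (simp add: gen_word_def)
qed (simp add: gen_word_def)

lemma proper_simple_gen_word: "proper_simple w \<Longrightarrow> gen_word w"
  using simple_word_reduced reduced_gen_word by (simp add: proper_simple_def)

lemma gen_word_delta_word: "gen_word delta_word" by (simp add: gen_word_def delta_word_def)

lemma peq_flip_delta_word: "peq (flip delta_word) delta_word"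
proof -
  have "reduced (flip delta_word)" "perm_of (flip delta_word) = perm_of delta_word"
    by (simp_all add: reduced_def flip_def delta_word_def perm_of_def perm_id_def)
  then show ?thesis using reduced_peq_same_perm reduced_delta_word by blast
qed

lemma delta_word_append_gen: assumes "1 \<le> i" "i \<le> 4" shows "peq (delta_word @ [i]) ((5 - i) # delta_word)"
proof -
  have "1 \<le> 5 - i" "5 - i \<le> 4" using assms by auto
  then obtain X where X: "peq delta_word ((5 - i) # X)" using delta_word_gen_prefix by blast
  have rX: "reduced X" using reduced_Cons(1) reduced_peq[OF X reduced_delta_word] by blast
  have "perm_of X = swap_val (5 - i) perm_longest"
    using perm_of_peq[OF X] perm_of_delta_word swap_val_swap_val by (metis perm_of_Cons)
  moreover have "i = 1 \<or> i = 2 \<or> i = 3 \<or> i = 4" using assms by auto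
  ultimately have pXi: "perm_of (X @ [i]) = perm_longest"
    by (auto simp: perm_of_snoc swap_val_def perm_longest_def)
  have "length X = 9" using peq_length[OF X] length_delta_word by simp
  then have "reduced (X @ [i])" using pXi inversions_longest by (simp add: reduced_def)
  then have "peq (X @ [i]) delta_word"
    using reduced_peq_same_perm reduced_delta_word pXi perm_of_delta_word by simp
  then show ?thesis using peq_Cons_trans[OF peq_append_right[OF X, of "[i]", simplified]] by blast
qed

lemma delta_word_append: "gen_word X \<Longrightarrow> peq (delta_word @ X) (flip X @ delta_word)"
proof (induction X)
  case (Cons i X)
  have i: "1 \<le> i" "i \<le> 4" and X: "gen_word X" using Cons.prems by (auto simp: gen_word_def)
  have "peq (delta_word @ i # X) (((5 - i) # delta_word) @ X)"
    using peq_append_right[OF delta_word_append_gen[OF i], of X] by simp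
  also have "peq \<dots> ((5 - i) # flip X @ delta_word)" using peq_Cons[OF Cons.IH[OF X]] by simp
  finally show ?case by (simp add: flip_Cons)
qed (simp add: flip_def)

lemma gen_word_flip_pow: "gen_word X \<Longrightarrow> gen_word (flip_pow k X)"
  by (simp add: flip_pow_def gen_word_flip)
lemma flip_pow_flip_pow: "gen_word X \<Longrightarrow> flip_pow k (flip_pow k X) = X"
  by (simp add: flip_pow_def flip_flip)
lemma flip_pow_add: "gen_word X \<Longrightarrow> flip_pow j (flip_pow k X) = flip_pow (j + k) X"
  by (auto simp: flip_pow_def flip_flip)
lemma flip_flip_pow: "gen_word X \<Longrightarrow> flip (flip_pow k X) = flip_pow (Suc k) X"
  by (simp add: flip_pow_def flip_flip)

lemma delta_word_pow_Suc: "delta_word_pow (Suc k) = delta_word @ delta_word_pow k"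
  by (simp add: delta_word_pow_def)
lemma delta_word_pow_Suc': "delta_word_pow (Suc k) = delta_word_pow k @ delta_word"
  by (simp add: delta_word_pow_def replicate_append_same[symmetric])
lemma delta_word_pow_add: "delta_word_pow (a + b) = delta_word_pow a @ delta_word_pow b"
  by (simp add: delta_word_pow_def replicate_add)
lemma gen_word_delta_word_pow: "gen_word (delta_word_pow k)"
  by (induction k) (auto simp: delta_word_pow_def gen_word_def delta_word_def)

lemma delta_word_pow_append: "gen_word X \<Longrightarrow> peq (delta_word_pow k @ X) (flip_pow k X @ delta_word_pow k)"
proof (induction k)
  case (Suc k)
  have "peq (delta_word @ delta_word_pow k @ X) (delta_word @ flip_pow k X @ delta_word_pow k)"
    using Suc by (simp add: peq_append_left)
  also have "peq \<dots> (flip (flip_pow k X) @ delta_word @ delta_word_pow k)"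
    using peq_append_right[OF delta_word_append[OF gen_word_flip_pow[OF Suc.prems]]] by simp
  finally show ?case using flip_flip_pow[OF Suc.prems] by (simp add: delta_word_pow_Suc)
qed (simp add: delta_word_pow_def flip_pow_def)

lemma proper_simple_flip: assumes "proper_simple w" shows "proper_simple (flip w)"
proof -
  have w: "gen_word w" using proper_simple_gen_word assms by blast
  obtain Z where "peq (w @ Z) delta_word" using assms by (auto simp: proper_simple_def simple_word_def)
  then have "peq (flip w @ flip Z) delta_word"
    using peq_trans[OF peq_flip peq_flip_delta_word] by (metis flip_append)
  moreover have "\<not> peq (flip w) delta_word"
  proof
    assume "peq (flip w) delta_word"
    then have "peq w delta_word" using peq_trans[OF peq_flip peq_flip_delta_word] flip_flip[OF w] by metis
    then show False using assms by (simp add: proper_simple_def)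
  qed
  ultimately show ?thesis using assms by (auto simp: proper_simple_def simple_word_def flip_def)
qed

lemma left_weighted_word_flip:
  assumes "left_weighted_word a b" "gen_word a" "gen_word b"
  shows "left_weighted_word (flip a) (flip b)"
  unfolding left_weighted_word_def
proof (intro allI impI notI)
  fix m Z y assume h1: "peq (flip b) (m # Z)" and h2: "peq (flip a @ m # y) delta_word"
  have "peq b ((5 - m) # flip Z)" using peq_flip[OF h1] flip_flip[OF assms(3)] by (simp add: flip_Cons)
  moreover have "peq (a @ (5 - m) # flip y) delta_word"
    using peq_trans[OF peq_flip[OF h2] peq_flip_delta_word] flip_flip[OF assms(2)] by (simp add: flip_append flip_Cons)
  ultimately show False using assms(1) unfolding left_weighted_word_def by blast
qed

lemma normal_chain_flip: "normal_chain Ws \<Longrightarrow> normal_chain (map flip Ws)"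
  by (induction Ws rule: normal_chain.induct)
     (auto simp: proper_simple_flip left_weighted_word_flip proper_simple_gen_word normal_chain_Cons)

definition complement :: "nat list \<Rightarrow> nat list" where "complement W = (SOME c. peq (W @ c) delta_word)"

lemma complement_right: "simple_word W \<Longrightarrow> peq (W @ complement W) delta_word"
  unfolding complement_def simple_word_def by (rule someI_ex)

lemma complement_left: assumes "simple_word W" shows "peq (complement W @ flip W) delta_word"
proof -
  have W: "gen_word W" using simple_word_reduced reduced_gen_word assms by blast
  have "peq (W @ complement W @ flip W) (delta_word @ flip W)"
    using peq_append_right[OF complement_right[OF assms], of "flip W"] by simp
  also have "peq \<dots> (W @ delta_word)" using delta_word_append[OF gen_word_flip[OF W]] flip_flip[OF W] by simp
  finally show ?thesis by (rule peq_left_cancel)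
qed

lemma proper_simple_complement: assumes "proper_simple W" shows "proper_simple (complement W)"
proof -
  have W: "simple_word W" using assms by (simp add: proper_simple_def)
  have len: "length W + length (complement W) = 10"
    using peq_length[OF complement_right[OF W]] length_delta_word by simp
  have "complement W \<noteq> []" using complement_right[OF W] assms by (auto simp: proper_simple_def)
  moreover have "\<not> peq (complement W) delta_word"
    using len peq_length length_delta_word assms by (fastforce simp: proper_simple_def)
  ultimately show ?thesis using complement_left[OF W] by (auto simp: proper_simple_def simple_word_def)
qed

lemma left_weighted_word_complement:
  assumes "left_weighted_word W1 W2" "simple_word W1" "simple_word W2" "gen_word (complement W1)"
  shows "left_weighted_word (complement W2) (flip (complement W1))"
  unfolding left_weighted_word_def
proof (intro allI impI notI)
  fix m Z y assume h1: "peq (flip (complement W1)) (m # Z)" and h2: "peq (complement W2 @ m # y) delta_word"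
  have W2: "gen_word W2" using simple_word_reduced reduced_gen_word assms(3) by blast
  have "peq (complement W2 @ m # y) (complement W2 @ flip W2)"
    using peq_trans[OF h2 peq_sym[OF complement_left[OF assms(3)]]] .
  then have "peq (flip W2) (m # y)" using peq_sym peq_left_cancel by blast
  then have w2: "peq W2 ((5 - m) # flip y)" using peq_flip flip_flip[OF W2] by (fastforce simp: flip_Cons)
  have "peq (complement W1) ((5 - m) # flip Z)"
    using peq_flip[OF h1] flip_flip[OF assms(4)] by (simp add: flip_Cons)
  then have "peq (W1 @ (5 - m) # flip Z) delta_word"
    using peq_trans[OF peq_append_left[OF peq_sym] complement_right[OF assms(2)]] by blast
  then show False using w2 assms(1) unfolding left_weighted_word_def by blast
qed

text \<open>For a normal chain \<open>W\<^sub>1 \<dots> W\<^sub>r\<close> the complements give a normal chain \<open>C\<close> with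
  \<open>W\<^sub>1 \<cdots> W\<^sub>r \<cdot> C = \<Delta>\<^sup>r\<close>: \<open>C\<close> lists the complement of \<open>W\<^sub>r\<close>, then that of \<open>W\<^sub>r\<^sub>-\<^sub>1\<close>
  conjugated once, and so on.\<close>

fun complement_chain :: "nat list list \<Rightarrow> nat list list" where
  "complement_chain [] = []"
| "complement_chain (W # Ws) = complement W # map flip (complement_chain Ws)"

lemma complement_chain_length: "length (complement_chain R) = length R"
  by (induction R) auto

lemma complement_chain_hd: "R \<noteq> [] \<Longrightarrow> hd (complement_chain R) = complement (hd R)"
  by (cases R) auto

lemma normal_chain_complement_chain: "normal_chain (rev R) \<Longrightarrow> normal_chain (complement_chain R)"
proof (induction R)
  case (Cons W R)
  have ch: "normal_chain (rev R)" "proper_simple W" "R \<noteq> [] \<Longrightarrow> left_weighted_word (hd R) W"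
    using Cons.prems normal_chain_snoc[of "rev R" W] by (auto simp: last_rev)
  have "left_weighted_word (complement W) (flip (complement (hd R)))" if "R \<noteq> []"
  proof (rule left_weighted_word_complement[OF ch(3)[OF that]])
    have "proper_simple (hd R)" using normal_chain_proper_simple[OF ch(1)] that by simp
    then show "simple_word (hd R)" "gen_word (complement (hd R))"
      using proper_simple_complement proper_simple_gen_word by (auto simp: proper_simple_def)
    show "simple_word W" using ch(2) by (simp add: proper_simple_def)
  qed
  moreover have "complement_chain R \<noteq> [] \<longleftrightarrow> R \<noteq> []" using complement_chain_length[of R] by auto
  ultimately show ?case using Cons.IH[OF ch(1)] ch(2) complement_chain_hd[of R]
    by (auto simp: normal_chain_Cons proper_simple_complement normal_chain_flip hd_map)
qed simp

lemma concat_complement_chain: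
  "normal_chain (rev R) \<Longrightarrow> peq (concat (rev R) @ concat (complement_chain R)) (delta_word_pow (length R))"
proof (induction R)
  case (Cons W R)
  have ch: "normal_chain (rev R)" "simple_word W"
    using Cons.prems normal_chain_snoc[of "rev R" W] by (auto simp: proper_simple_def)
  have C: "gen_word (concat (complement_chain R))"
    using gen_word_concat normal_chain_proper_simple[OF normal_chain_complement_chain[OF ch(1)]]
      proper_simple_gen_word by blast
  have "concat (map flip (complement_chain R)) = flip (concat (complement_chain R))"
    unfolding flip_def by (simp add: map_concat)
  then have "concat (rev (W # R)) @ concat (complement_chain (W # R))
      = concat (rev R) @ (W @ complement W) @ flip (concat (complement_chain R))" by simp
  also have "peq \<dots> (concat (rev R) @ delta_word @ flip (concat (complement_chain R)))"
    using peq_append[OF complement_right[OF ch(2)]] by simp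
  also have "peq \<dots> ((concat (rev R) @ concat (complement_chain R)) @ delta_word)"
    using peq_append_left[OF delta_word_append[OF gen_word_flip[OF C]]] flip_flip[OF C] by simp
  also have "peq \<dots> (delta_word_pow (length (W # R)))"
    using peq_append_right[OF Cons.IH[OF ch(1)]] by (simp add: delta_word_pow_Suc')
  finally show ?case .
qed (simp add: delta_word_pow_def)

section \<open>Uniqueness of infimum and supremum for normal chains\<close>

lemma normal_chain_delta_word_pow_eq:
  "normal_chain X \<Longrightarrow> normal_chain Y \<Longrightarrow> peq (delta_word_pow k @ concat X) (concat Y) \<Longrightarrow> k = 0"
proof (rule ccontr)
  assume "normal_chain X" "normal_chain Y" and h: "peq (delta_word_pow k @ concat X) (concat Y)" and "k \<noteq> 0"
  then obtain k' where "k = Suc k'" by (cases k) auto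
  then have "peq (concat Y) (delta_word @ (delta_word_pow k' @ concat X))"
    using peq_sym[OF h] by (simp add: delta_word_pow_Suc)
  then show False using normal_chain_no_delta_prefix \<open>normal_chain Y\<close> by blast
qed

lemma normal_chain_length_le:
  assumes X: "normal_chain X" and Y: "normal_chain Y" and XY: "peq (concat X) (concat Y)"
  shows "length Y \<le> length X"
proof (rule ccontr)
  assume "\<not> length Y \<le> length X"
  then obtain d where d: "length Y = length X + Suc d" by (metis add_Suc_right less_imp_Suc_add not_le)
  define CX where "CX = concat (complement_chain (rev X))"
  define CY where "CY = concat (complement_chain (rev Y))"
  have CX: "peq (concat X @ CX) (delta_word_pow (length X))" "gen_word CX"
    using concat_complement_chain[of "rev X"] normal_chain_complement_chain[of "rev X"] X
      gen_word_concat[OF proper_simple_gen_word[OF normal_chain_proper_simple]] by (auto simp: CX_def)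
  have CY: "peq (concat Y @ CY) (delta_word_pow (length Y))" "normal_chain (complement_chain (rev Y))"
    using concat_complement_chain[of "rev Y"] normal_chain_complement_chain[of "rev Y"] Y by (auto simp: CY_def)
  have "delta_word_pow (length Y) = delta_word_pow (length X) @ delta_word_pow (Suc d)"
    using d delta_word_pow_add[of "length X" "Suc d"] by simp
  then have "peq (concat Y @ CY) ((concat X @ CX) @ delta_word_pow (Suc d))"
    using peq_trans[OF CY(1)] peq_sym[OF peq_append_right[OF CX(1), of "delta_word_pow (Suc d)"]] by simp
  also have "peq \<dots> (concat Y @ CX @ delta_word_pow (Suc d))" using peq_append_right[OF XY] by simp
  finally have "peq CY (CX @ delta_word_pow (Suc d))" by (rule peq_left_cancel)
  also have "peq \<dots> (delta_word_pow (Suc d) @ flip_pow (Suc d) CX)"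
    using peq_sym[OF delta_word_pow_append[OF gen_word_flip_pow[OF CX(2)], of "Suc d" "Suc d"]]
    by (simp only: flip_pow_flip_pow[OF CX(2)])
  finally have "peq CY (delta_word @ delta_word_pow d @ flip_pow (Suc d) CX)" by (simp add: delta_word_pow_Suc)
  then show False using normal_chain_no_delta_prefix CY(2) CY_def by blast
qed

lemma normal_chain_length_eq:
  "normal_chain X \<Longrightarrow> normal_chain Y \<Longrightarrow> peq (concat X) (concat Y) \<Longrightarrow> length X = length Y"
  using normal_chain_length_le peq_sym by (meson le_antisym)

section \<open>Garside's embedding of the positive monoid into \<open>B\<^sub>5\<close>\<close>

definition pword :: "nat list \<Rightarrow> bword" where "pword w = map (\<lambda>i. (i, True)) w"

lemma pword_append: "pword (u @ v) = pword u @ pword v" by (simp add: pword_def)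

lemma sig_pword: "sig i = pword [i]" by (simp add: sig_def pword_def)

lemma Delta_pword: "Delta = pword delta_word" by (simp add: Delta_def sig_def pword_def delta_word_def)

declare bequiv.trans[trans]

lemma bequiv_append: assumes "bequiv u u'" "bequiv v v'" shows "bequiv (u @ v) (u' @ v')"
proof -
  have "bequiv (u @ v) (u' @ v)" using bequiv.ctx[OF assms(1), of "[]" v] by simp
  also have "bequiv \<dots> (u' @ v')" using bequiv.ctx[OF assms(2), of u' "[]"] by simp
  finally show ?thesis .
qed

lemma bequiv_append_left: "bequiv v v' \<Longrightarrow> bequiv (u @ v) (u @ v')"
  using bequiv_append bequiv.refl by blast
lemma bequiv_append_right: "bequiv u u' \<Longrightarrow> bequiv (u @ v) (u' @ v)"
  using bequiv_append bequiv.refl by blast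

lemma braid_step_bequiv: "braid_step u v \<Longrightarrow> bequiv (pword u) (pword v)"
proof (induction rule: braid_step.induct)
  case (far_swap i j xs ys)
  have "bequiv [(i, True), (j, True)] [(j, True), (i, True)]"
    using far_swap bequiv.far_comm[of i j] bequiv.sym[OF bequiv.far_comm[of j i]] by (auto simp: far_def)
  from bequiv.ctx[OF this, of "pword xs" "pword ys"] show ?case by (simp add: pword_def)
next
  case (braid i j xs ys)
  have "bequiv [(i, True), (j, True), (i, True)] [(j, True), (i, True), (j, True)]"
    using braid bequiv.braid_rel[of i] bequiv.sym[OF bequiv.braid_rel[of j]] by (auto simp: adj_def)
  from bequiv.ctx[OF this, of "pword xs" "pword ys"] show ?case by (simp add: pword_def)
qed

lemma peq_bequiv: "peq u v \<Longrightarrow> bequiv (pword u) (pword v)"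
  by (induction rule: rtranclp_induct) (auto intro: bequiv.refl bequiv.trans braid_step_bequiv)

definition gen_bword :: "bword \<Rightarrow> bool" where "gen_bword w \<longleftrightarrow> (\<forall>l\<in>set w. 1 \<le> fst l \<and> fst l \<le> 4)"

lemma gen_bword_pword: "gen_bword (pword w) \<longleftrightarrow> gen_word w"
  by (auto simp: gen_bword_def gen_word_def pword_def)

lemma bequiv_gen_bword: assumes "bequiv u v" "gen_bword v" shows "gen_bword u"
proof -
  have off: "gen_bword w \<longleftrightarrow> filter (\<lambda>l. fst l \<notin> {1..4}) w = []" for w
    by (auto simp: gen_bword_def filter_empty_conv)
  have "filter (\<lambda>l. fst l \<notin> {1..4}) u = filter (\<lambda>l. fst l \<notin> {1..4}) v"
    using assms(1) by (induction rule: bequiv.induct) auto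
  then show ?thesis using assms(2) off by simp
qed

lemma winv_append: "winv (u @ v) = winv v @ winv u" by (simp add: winv_def)

lemma bequiv_append_winv: "gen_bword w \<Longrightarrow> bequiv (w @ winv w) []"
proof (induction w)
  case (Cons l w)
  obtain i e where l: "l = (i, e)" by (cases l)
  have "i \<in> {1..4}" "gen_bword w" using Cons.prems l by (auto simp: gen_bword_def)
  have "bequiv ([l] @ (w @ winv w) @ [(i, \<not> e)]) ([l] @ [] @ [(i, \<not> e)])"
    using bequiv.ctx Cons.IH[OF \<open>gen_bword w\<close>] by blast
  also have "bequiv \<dots> []" using bequiv.cancel[OF \<open>i \<in> {1..4}\<close>] l by simp
  finally show ?case using l by (simp add: winv_def)
qed (simp add: winv_def bequiv.refl)

lemma bequiv_winv_append: "gen_bword w \<Longrightarrow> bequiv (winv w @ w) []"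
proof (induction w rule: rev_induct)
  case (snoc l w)
  obtain i e where l: "l = (i, e)" by (cases l)
  have "i \<in> {1..4}" "gen_bword w" using snoc.prems l by (auto simp: gen_bword_def)
  have "bequiv ([(i, \<not> e)] @ (winv w @ w) @ [l]) ([(i, \<not> e)] @ [] @ [l])"
    using bequiv.ctx snoc.IH[OF \<open>gen_bword w\<close>] by blast
  also have "bequiv \<dots> []" using bequiv.cancel[OF \<open>i \<in> {1..4}\<close>, of "\<not> e"] l by simp
  finally show ?case using l by (simp add: winv_def)
qed (simp add: winv_def bequiv.refl)

text \<open>\<open>\<Delta> = \<sigma>\<^sub>i \<cdot> delta_quot i = flip (delta_quot i) \<cdot> \<sigma>\<^sub>i\<close>, so that
  \<open>\<sigma>\<^sub>i\<^sup>-\<^sup>1 = delta_quot i \<cdot> \<Delta>\<^sup>-\<^sup>1\<close>.\<close>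

definition delta_quot :: "nat \<Rightarrow> nat list" where
  "delta_quot i = (if i = 1 then [2,3,4,1,2,3,1,2,1] else if i = 2 then [1,2,3,4,2,3,1,2,1]
           else if i = 3 then [1,2,3,4,1,2,3,2,1] else [1,2,3,4,1,2,3,1,2])"

lemma delta_quot:
  assumes "1 \<le> i" "i \<le> 4"
  shows "peq (i # delta_quot i) delta_word" "peq (flip (delta_quot i) @ [i]) delta_word" "gen_word (delta_quot i)"
proof -
  have i: "i = 1 \<or> i = 2 \<or> i = 3 \<or> i = 4" using assms by auto
  have "reduced (i # delta_quot i) \<and> perm_of (i # delta_quot i) = perm_of delta_word"
    using i by (auto simp: delta_quot_def reduced_def perm_of_def perm_id_def delta_word_def)
  then show "peq (i # delta_quot i) delta_word" using reduced_peq_same_perm reduced_delta_word by blast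
  have "reduced (flip (delta_quot i) @ [i]) \<and> perm_of (flip (delta_quot i) @ [i]) = perm_of delta_word"
    using i by (auto simp: delta_quot_def reduced_def perm_of_def perm_id_def delta_word_def flip_def)
  then show "peq (flip (delta_quot i) @ [i]) delta_word" using reduced_peq_same_perm reduced_delta_word by blast
  show "gen_word (delta_quot i)" using i by (auto simp: delta_quot_def gen_word_def)
qed

text \<open>Every group word \<open>w\<close> equals \<open>\<Delta>\<^sup>-\<^sup>k N\<close> with \<open>k = neg_count w\<close> and \<open>N = garside_num w\<close>
  positive, obtained by pushing each \<open>\<Delta>\<^sup>-\<^sup>1\<close> to the front.\<close>

definition garside_step :: "nat list \<Rightarrow> nat \<times> bool \<Rightarrow> nat list" where
  "garside_step N l = (if 1 \<le> fst l \<and> fst l \<le> 4 then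
     (if snd l then N @ [fst l] else flip (N @ delta_quot (fst l))) else N)"

definition garside_num :: "bword \<Rightarrow> nat list" where "garside_num w = foldl garside_step [] w"

definition neg_count :: "bword \<Rightarrow> nat" where
  "neg_count w = length (filter (\<lambda>l. 1 \<le> fst l \<and> fst l \<le> 4 \<and> \<not> snd l) w)"

lemma garside_num_snoc: "garside_num (w @ [l]) = garside_step (garside_num w) l"
  by (simp add: garside_num_def)

lemma neg_count_append: "neg_count (u @ v) = neg_count u + neg_count v" by (simp add: neg_count_def)

lemma gen_word_garside_num: "gen_word (garside_num w)"
proof (induction w rule: rev_induct)
  case (snoc l w)
  then show ?case using delta_quot(3)[of "fst l"]
    by (auto simp: garside_num_snoc garside_step_def gen_word_append gen_word_def[of "[_]"] intro!: gen_word_flip)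
qed (simp add: garside_num_def gen_word_def)

lemma garside_num_append: "garside_num (u @ v) = flip_pow (neg_count v) (garside_num u) @ garside_num v"
proof (induction v rule: rev_induct)
  case Nil thus ?case by (simp add: garside_num_def neg_count_def flip_pow_def)
next
  case (snoc l v)
  show ?case
  proof (cases "1 \<le> fst l \<and> fst l \<le> 4 \<and> \<not> snd l")
    case True
    then have "garside_num (u @ v @ [l]) = flip (flip_pow (neg_count v) (garside_num u)) @ garside_num (v @ [l])"
      using garside_num_snoc[of "u @ v" l] by (simp add: snoc garside_num_snoc garside_step_def flip_append)
    then show ?thesis using True flip_flip_pow[OF gen_word_garside_num] by (simp add: neg_count_def)
  next
    case False
    then show ?thesis using garside_num_snoc[of "u @ v" l] snoc
      by (auto simp: garside_num_snoc garside_step_def neg_count_def)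
  qed
qed

definition garside_eq :: "bword \<Rightarrow> bword \<Rightarrow> bool" where
  "garside_eq u v \<longleftrightarrow>
     peq (delta_word_pow (neg_count v) @ garside_num u) (delta_word_pow (neg_count u) @ garside_num v)"

lemma delta_word_pow_commute: "delta_word_pow a @ delta_word_pow b = delta_word_pow b @ delta_word_pow a"
  by (metis delta_word_pow_add add.commute)

lemma garside_eq_trans: assumes "garside_eq u v" "garside_eq v w" shows "garside_eq u w"
proof -
  let ?D = delta_word_pow and ?N = garside_num and ?m = neg_count
  have "peq (?D (?m v) @ ?D (?m w) @ ?N u) (?D (?m w) @ ?D (?m v) @ ?N u)"
    by (metis append_assoc delta_word_pow_commute rtranclp.rtrancl_refl)
  also have "peq \<dots> (?D (?m w) @ ?D (?m u) @ ?N v)"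
    using assms(1) unfolding garside_eq_def by (rule peq_append_left)
  also have "\<dots> = ?D (?m u) @ ?D (?m w) @ ?N v" by (metis append_assoc delta_word_pow_commute)
  also have "peq \<dots> (?D (?m u) @ ?D (?m v) @ ?N w)"
    using assms(2) unfolding garside_eq_def by (rule peq_append_left)
  also have "\<dots> = ?D (?m v) @ ?D (?m u) @ ?N w" by (metis append_assoc delta_word_pow_commute)
  finally show ?thesis unfolding garside_eq_def by (rule peq_left_cancel)
qed

lemma garside_eq_append_right: assumes "garside_eq u v" shows "garside_eq (u @ b) (v @ b)"
proof -
  let ?D = delta_word_pow and ?N = garside_num and ?m = neg_count
  have "?D (?m (v @ b)) @ ?N (u @ b) = ?D (?m v) @ (?D (?m b) @ flip_pow (?m b) (?N u)) @ ?N b"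
    by (simp add: garside_num_append neg_count_append delta_word_pow_add)
  also have "peq \<dots> (?D (?m v) @ (?N u @ ?D (?m b)) @ ?N b)"
    using delta_word_pow_append[OF gen_word_flip_pow[OF gen_word_garside_num]]
      flip_pow_flip_pow[OF gen_word_garside_num] by (intro peq_append) metis
  also have "peq \<dots> (?D (?m u) @ (?N v @ ?D (?m b)) @ ?N b)"
    using peq_append_right[OF assms[unfolded garside_eq_def], of "?D (?m b) @ ?N b"] by simp
  also have "peq \<dots> (?D (?m u) @ (?D (?m b) @ flip_pow (?m b) (?N v)) @ ?N b)"
    using peq_sym[OF delta_word_pow_append[OF gen_word_flip_pow[OF gen_word_garside_num]]]
      flip_pow_flip_pow[OF gen_word_garside_num] by (intro peq_append) metis
  also have "\<dots> = ?D (?m (u @ b)) @ ?N (v @ b)"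
    by (simp add: garside_num_append neg_count_append delta_word_pow_add)
  finally show ?thesis unfolding garside_eq_def .
qed

lemma garside_eq_append_left: assumes "garside_eq u v" shows "garside_eq (a @ u) (a @ v)"
proof -
  let ?D = delta_word_pow and ?N = garside_num and ?m = neg_count
  have A: "gen_word (?N a)" by (rule gen_word_garside_num)
  have "?D (?m (a @ v)) @ ?N (a @ u) = ?D (?m a) @ (?D (?m v) @ flip_pow (?m u) (?N a)) @ ?N u"
    by (simp add: garside_num_append neg_count_append delta_word_pow_add)
  also have "peq \<dots> (?D (?m a) @ (flip_pow (?m u + ?m v) (?N a) @ ?D (?m v)) @ ?N u)"
    using delta_word_pow_append[OF gen_word_flip_pow[OF A], of "?m v" "?m u"] flip_pow_add[OF A]
    by (intro peq_append) (simp add: add.commute)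
  also have "peq \<dots> (?D (?m a) @ flip_pow (?m u + ?m v) (?N a) @ ?D (?m u) @ ?N v)"
    using peq_append_left[OF assms[unfolded garside_eq_def], of "?D (?m a) @ flip_pow (?m u + ?m v) (?N a)"]
    by simp
  also have "peq \<dots> (?D (?m a) @ (?D (?m u) @ flip_pow (?m v) (?N a)) @ ?N v)"
    using peq_append[OF peq_sym[OF delta_word_pow_append[OF gen_word_flip_pow[OF A], of "?m u" "?m v"]],
        of "?D (?m a)" "?N v"] flip_pow_add[OF A]
    by simp
  also have "\<dots> = ?D (?m (a @ u)) @ ?N (a @ v)"
    by (simp add: garside_num_append neg_count_append delta_word_pow_add)
  finally show ?thesis unfolding garside_eq_def .
qed

lemma bequiv_garside_eq: "bequiv u v \<Longrightarrow> garside_eq u v"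
proof (induction rule: bequiv.induct)
  case (sym u v) thus ?case by (simp add: garside_eq_def peq_sym)
next
  case (trans u v w) thus ?case using garside_eq_trans by blast
next
  case (ctx u v a b) thus ?case using garside_eq_append_left garside_eq_append_right by simp
next
  case (cancel i e)
  then have i: "1 \<le> i" "i \<le> 4" by auto
  show ?case
  proof (cases e)
    case True
    have "peq (flip (i # delta_quot i)) delta_word"
      using peq_trans[OF peq_flip[OF delta_quot(1)[OF i]] peq_flip_delta_word] .
    then show ?thesis using True i
      by (simp add: garside_eq_def garside_num_def garside_step_def neg_count_def delta_word_pow_def)
  next
    case False
    then show ?thesis using delta_quot(2)[OF i] i
      by (simp add: garside_eq_def garside_num_def garside_step_def neg_count_def delta_word_pow_def)
  qed
next
  case (far_comm i j)
  then have "far i j" by (auto simp: far_def)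
  then show ?case using far_comm peq_far_swap[of i j "[]"]
    by (auto simp: garside_eq_def garside_num_def garside_step_def neg_count_def delta_word_pow_def)
next
  case (braid_rel i)
  then have "adj i (Suc i)" by (auto simp: adj_def)
  then show ?case using braid_rel peq_braid[of i "Suc i" "[]"]
    by (auto simp: garside_eq_def garside_num_def garside_step_def neg_count_def delta_word_pow_def)
qed (simp add: garside_eq_def)

lemma garside_num_pword: "gen_word u \<Longrightarrow> garside_num (pword u) = u"
proof (induction u rule: rev_induct)
  case (snoc i u)
  then have "gen_word u" "1 \<le> i \<and> i \<le> 4" by (auto simp: gen_word_def)
  then show ?case using snoc.IH by (simp add: pword_append pword_def[of "[i]"] garside_num_snoc garside_step_def)
qed (simp add: garside_num_def pword_def)

lemma neg_count_pword: "neg_count (pword u) = 0" by (simp add: neg_count_def pword_def filter_empty_conv)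

theorem pword_bequiv_peq: "bequiv (pword u) (pword v) \<Longrightarrow> gen_word u \<Longrightarrow> gen_word v \<Longrightarrow> peq u v"
  using bequiv_garside_eq[of "pword u" "pword v"]
  by (simp add: garside_eq_def garside_num_pword neg_count_pword delta_word_pow_def)

section \<open>Simple braids and uniqueness of the left normal form\<close>

lemma positive_iff_pword: "positive x \<longleftrightarrow> (\<exists>w. gen_word w \<and> bequiv x (pword w))"
proof
  assume "positive x"
  then obtain w where w: "\<forall>l\<in>set w. fst l \<in> {1..4} \<and> snd l" "bequiv x w" unfolding Defs.positive_def by blast
  have "w = pword (map fst w)" using w(1) by (auto simp: pword_def intro!: map_idI[symmetric] prod_eqI)
  moreover have "gen_word (map fst w)" using w(1) by (auto simp: gen_word_def)
  ultimately show "\<exists>w. gen_word w \<and> bequiv x (pword w)" using w(2) by metis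
next
  assume "\<exists>w. gen_word w \<and> bequiv x (pword w)"
  then obtain w where "gen_word w" "bequiv x (pword w)" by blast
  moreover have "\<forall>l\<in>set (pword w). fst l \<in> {1..4} \<and> snd l" using \<open>gen_word w\<close>
    by (auto simp: pword_def gen_word_def)
  ultimately show "positive x" unfolding Defs.positive_def by blast
qed

lemma simple_iff_simple_word: "simple x \<longleftrightarrow> (\<exists>w. bequiv x (pword w) \<and> simple_word w)"
proof
  assume "simple x"
  then obtain w z where w: "gen_word w" "bequiv x (pword w)" and z: "gen_word z" "bequiv (winv x @ Delta) (pword z)"
    by (auto simp: simple_def prefix_le_def winv_def positive_iff_pword)
  have x: "gen_bword x" using bequiv_gen_bword[OF w(2)] gen_bword_pword w(1) by blast
  have "bequiv Delta ((x @ winv x) @ Delta)"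
    using bequiv_append_right[OF bequiv.sym[OF bequiv_append_winv[OF x]]] by simp
  also have "bequiv \<dots> (pword w @ pword z)" using bequiv_append[OF w(2) z(2)] by simp
  finally have "peq delta_word (w @ z)"
    using pword_bequiv_peq[of delta_word "w @ z"] w(1) z(1) gen_word_delta_word
    by (simp add: Delta_pword pword_append gen_word_append)
  then show "\<exists>w. bequiv x (pword w) \<and> simple_word w" using w(2) peq_sym by (auto simp: simple_word_def)
next
  assume "\<exists>w. bequiv x (pword w) \<and> simple_word w"
  then obtain w t where w: "bequiv x (pword w)" "gen_word w" and t: "peq (w @ t) delta_word"
    by (metis simple_word_def simple_word_reduced reduced_gen_word)
  have x: "gen_bword x" using bequiv_gen_bword[OF w(1)] gen_bword_pword w(2) by blast
  have "gen_word t" using peq_gen_word[OF peq_sym[OF t] gen_word_delta_word] by (simp add: gen_word_append)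
  moreover have "bequiv (winv x @ Delta) (pword t)"
  proof -
    have "bequiv (winv x @ Delta) (winv x @ pword w @ pword t)"
      using bequiv_append_left[OF peq_bequiv[OF peq_sym[OF t]]] by (simp add: Delta_pword pword_append)
    also have "bequiv \<dots> ((winv x @ x) @ pword t)"
      using bequiv_append_left[OF bequiv_append_right[OF bequiv.sym[OF w(1)]]] by simp
    also have "bequiv \<dots> (pword t)" using bequiv_append_right[OF bequiv_winv_append[OF x]] by simp
    finally show ?thesis .
  qed
  ultimately have "positive (winv x @ Delta)" unfolding positive_iff_pword by blast
  moreover have "positive (winv [] @ x)" using w unfolding positive_iff_pword by (auto simp: winv_def)
  ultimately show "simple x" by (simp add: simple_def prefix_le_def)
qed

definition word_of_simple :: "bword \<Rightarrow> nat list" where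
  "word_of_simple s = (SOME w. bequiv s (pword w) \<and> simple_word w)"

lemma word_of_simple: "simple s \<Longrightarrow> bequiv s (pword (word_of_simple s)) \<and> simple_word (word_of_simple s)"
  unfolding word_of_simple_def by (rule someI_ex) (simp add: simple_iff_simple_word)

lemma proper_simple_word_of_simple:
  assumes "simple s" "\<not> bequiv s []" "\<not> bequiv s Delta"
  shows "proper_simple (word_of_simple s)"
proof -
  note w = word_of_simple[OF assms(1)]
  have "word_of_simple s \<noteq> []" using w assms(2) by (auto simp: pword_def)
  moreover have "\<not> peq (word_of_simple s) delta_word"
    using bequiv.trans[OF conjunct1[OF w] peq_bequiv] assms(3) Delta_pword by metis
  ultimately show ?thesis using w by (simp add: proper_simple_def)
qed

lemma left_weighted_word_of_simple:
  assumes s1: "simple s1" and s2: "simple s2" and lw: "left_weighted s1 s2"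
  shows "left_weighted_word (word_of_simple s1) (word_of_simple s2)"
  unfolding left_weighted_word_def
proof (intro allI impI notI)
  fix m Z y assume m2: "peq (word_of_simple s2) (m # Z)" and m1: "peq (word_of_simple s1 @ m # y) delta_word"
  note w1 = word_of_simple[OF s1] and w2 = word_of_simple[OF s2]
  have reduced: "reduced (m # Z)" using reduced_peq[OF m2 simple_word_reduced[OF conjunct2[OF w2]]] .
  then have m: "m \<in> {1..4}" using reduced_Cons by auto
  have "simple (s1 @ sig m)"
    unfolding simple_iff_simple_word using bequiv_append_right[OF conjunct1[OF w1], of "sig m"] m1
    by (intro exI[of _ "word_of_simple s1 @ [m]"]) (auto simp: sig_pword pword_append simple_word_def)
  moreover have "simple (winv (sig m) @ s2)"
    unfolding simple_iff_simple_word
  proof (intro exI conjI)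
    have "bequiv (winv (sig m) @ s2) ((winv (pword [m]) @ pword [m]) @ pword Z)"
      using bequiv_append_left[OF bequiv.trans[OF conjunct1[OF w2] peq_bequiv[OF m2]]]
      by (simp add: sig_pword pword_def)
    also have "bequiv \<dots> (pword Z)"
      using bequiv_append_right[OF bequiv_winv_append, of "pword [m]" "pword Z"] m
      by (simp add: gen_bword_def pword_def)
    finally show "bequiv (winv (sig m) @ s2) (pword Z)" .
    show "simple_word Z" using reduced_Cons(1)[OF reduced] reduced_simple_word by blast
  qed
  ultimately show False using lw m unfolding left_weighted_def by blast
qed

lemma concat_word_of_simple:
  "\<forall>s\<in>set xs. simple s \<Longrightarrow> bequiv (concat xs) (pword (concat (map word_of_simple xs)))"
proof (induction xs)
  case (Cons s xs) then show ?case using bequiv_append[OF conjunct1[OF word_of_simple]] by (simp add: pword_append)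
qed (simp add: pword_def bequiv.refl)

lemma LNF_normal_chain:
  assumes "is_LNF x p xs"
  obtains ws where "normal_chain ws" "length ws = length xs" "bequiv x (Delta_pow p @ pword (concat ws))"
proof
  have xs: "\<forall>s\<in>set xs. simple s \<and> \<not> bequiv s [] \<and> \<not> bequiv s Delta"
    "\<forall>i. Suc i < length xs \<longrightarrow> left_weighted (xs ! i) (xs ! Suc i)"
    using assms by (simp_all add: is_LNF_def)
  show "normal_chain (map word_of_simple xs)"
    unfolding normal_chain_nth using xs proper_simple_word_of_simple left_weighted_word_of_simple by auto
  show "bequiv x (Delta_pow p @ pword (concat (map word_of_simple xs)))"
    using bequiv.trans[OF conjunct1[OF assms[unfolded is_LNF_def]] bequiv_append_left[OF concat_word_of_simple]] xs
    by blast
qed simp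

lemma pword_delta_word_pow: "pword (delta_word_pow n) = wpow Delta n"
  by (induction n) (auto simp: wpow_def delta_word_pow_def pword_append Delta_pword pword_def)

lemma winv_wpow: "winv (wpow w n) = wpow (winv w) n"
proof (induction n)
  case (Suc n)
  have "winv (wpow w (Suc n)) = winv (wpow w n) @ winv w" by (simp add: wpow_def winv_append)
  then show ?case using Suc by (simp add: wpow_def replicate_append_same[symmetric])
qed (simp add: wpow_def winv_def)

lemma delta_word_pow_Delta_pow:
  assumes "0 \<le> int n + p"
  shows "bequiv (pword (delta_word_pow n) @ Delta_pow p) (pword (delta_word_pow (nat (int n + p))))"
proof (cases "0 \<le> p")
  case True
  then have "Delta_pow p = pword (delta_word_pow (nat p))" by (simp add: Delta_pow_def pword_delta_word_pow)
  moreover have "nat (int n + p) = n + nat p" using True by simp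
  ultimately show ?thesis by (simp add: pword_append[symmetric] delta_word_pow_add bequiv.refl)
next
  case False
  define m where "m = nat (- p)"
  have mn: "m \<le> n" using assms False m_def by simp
  have "Delta_pow p = winv (pword (delta_word_pow m))"
    using False by (simp add: Delta_pow_def m_def pword_delta_word_pow winv_wpow)
  moreover have "delta_word_pow n = delta_word_pow (n - m) @ delta_word_pow m"
    using mn delta_word_pow_add[of "n - m" m] by simp
  ultimately have "pword (delta_word_pow n) @ Delta_pow p
      = pword (delta_word_pow (n - m)) @ (pword (delta_word_pow m) @ winv (pword (delta_word_pow m)))"
    by (simp add: pword_append)
  also have "bequiv \<dots> (pword (delta_word_pow (n - m)) @ [])"
    using bequiv_append_left[OF bequiv_append_winv] gen_bword_pword gen_word_delta_word_pow by blast
  also have "n - m = nat (int n + p)" using mn m_def False by simp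
  finally show ?thesis by simp
qed

lemma normal_chain_delta_word_pow_unique:
  assumes ws: "normal_chain ws" and vs: "normal_chain vs"
    and eq: "peq (delta_word_pow a @ concat ws) (delta_word_pow b @ concat vs)"
  shows "a = b \<and> length ws = length vs"
proof -
  have "a = b"
  proof (cases a b rule: linorder_cases)
    case less
    then have "peq (delta_word_pow a @ concat ws) (delta_word_pow a @ (delta_word_pow (b - a) @ concat vs))"
      using eq delta_word_pow_add[of a "b - a"] by simp
    then have "peq (delta_word_pow (b - a) @ concat vs) (concat ws)" using peq_sym[OF peq_left_cancel] by blast
    from normal_chain_delta_word_pow_eq[OF vs ws this] less show ?thesis by simp
  next
    case greater
    then have "peq (delta_word_pow b @ (delta_word_pow (a - b) @ concat ws)) (delta_word_pow b @ concat vs)"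
      using eq delta_word_pow_add[of b "a - b"] by simp
    then have "peq (delta_word_pow (a - b) @ concat ws) (concat vs)" by (rule peq_left_cancel)
    from normal_chain_delta_word_pow_eq[OF ws vs this] greater show ?thesis by simp
  qed simp
  then show ?thesis using normal_chain_length_eq[OF ws vs peq_left_cancel] eq by simp
qed

theorem LNF_unique:
  assumes "is_LNF x p xs" "is_LNF x q ys" shows "p = q \<and> length xs = length ys"
proof -
  obtain ws where ws: "normal_chain ws" "length ws = length xs" "bequiv x (Delta_pow p @ pword (concat ws))"
    using LNF_normal_chain[OF assms(1)] by blast
  obtain vs where vs: "normal_chain vs" "length vs = length ys" "bequiv x (Delta_pow q @ pword (concat vs))"
    using LNF_normal_chain[OF assms(2)] by blast
  define n where "n = nat (\<bar>p\<bar> + \<bar>q\<bar>)"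
  have np: "0 \<le> int n + p" and nq: "0 \<le> int n + q" using n_def by auto
  have "bequiv (pword (delta_word_pow (nat (int n + p)) @ concat ws))
      (pword (delta_word_pow n) @ Delta_pow p @ pword (concat ws))"
    using bequiv_append_right[OF bequiv.sym[OF delta_word_pow_Delta_pow[OF np]]] by (simp add: pword_append)
  also have "bequiv \<dots> (pword (delta_word_pow n) @ Delta_pow q @ pword (concat vs))"
    using bequiv_append_left[OF bequiv.trans[OF bequiv.sym[OF ws(3)] vs(3)]] .
  also have "bequiv \<dots> (pword (delta_word_pow (nat (int n + q)) @ concat vs))"
    using bequiv_append_right[OF delta_word_pow_Delta_pow[OF nq]] by (simp add: pword_append)
  finally have "peq (delta_word_pow (nat (int n + p)) @ concat ws) (delta_word_pow (nat (int n + q)) @ concat vs)"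
    using pword_bequiv_peq gen_word_delta_word_pow ws(1) vs(1)
      gen_word_concat[OF proper_simple_gen_word[OF normal_chain_proper_simple]]
    by (simp add: gen_word_append)
  from normal_chain_delta_word_pow_unique[OF ws(1) vs(1) this] show ?thesis using ws(2) vs(2) np nq by linarith
qed

corollary binf_bsup_LNF: assumes "is_LNF x p xs" shows "binf x = p" "bsup x = p + int (length xs)"
proof -
  have "p' = p" if "is_LNF x p' xs'" for p' xs' using LNF_unique[OF that assms] by simp
  then show "binf x = p" unfolding binf_def using assms by (intro the_equality) blast+
  have "n = p + int (length xs)" if "is_LNF x q ys" "n = q + int (length ys)" for n q ys
    using LNF_unique[OF that(1) assms] that(2) by simp
  then show "bsup x = p + int (length xs)" unfolding bsup_def using assms by (intro the_equality) blast+
qed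

section \<open>Recognising simple braids by invariants\<close>

text \<open>Exponent sum and permutation are invariants of \<open>B\<^sub>5\<close>; on simple braids the exponent sum is
  the number of inversions of the permutation, which makes non-simplicity decidable by evaluation.\<close>

definition exp_sum :: "bword \<Rightarrow> int" where "exp_sum w = sum_list (map (\<lambda>l. if snd l then 1 else -1) w)"
definition perm_of_bword :: "bword \<Rightarrow> nat list" where "perm_of_bword w = perm_of (map fst w)"

lemma bequiv_invariants: "bequiv u v \<Longrightarrow> exp_sum u = exp_sum v \<and> perm_of_bword u = perm_of_bword v"
proof (induction rule: bequiv.induct)
  case (ctx u v a b) then show ?case by (simp add: exp_sum_def perm_of_bword_def perm_of_append)
next
  case (cancel i e)
  then have "i = 1 \<or> i = 2 \<or> i = 3 \<or> i = 4" by auto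
  then show ?case by (auto simp: exp_sum_def perm_of_bword_def perm_of_def perm_id_def)
next
  case (far_comm i j)
  then have "far i j" by (auto simp: far_def)
  then show ?case using perm_of_far by (simp add: exp_sum_def perm_of_bword_def)
next
  case (braid_rel i)
  then have "adj i (Suc i)" by (auto simp: adj_def)
  then show ?case using perm_of_adj by (simp add: exp_sum_def perm_of_bword_def)
qed auto

lemma simple_inversions_exp_sum: "simple x \<Longrightarrow> int (inversions (perm_of_bword x)) = exp_sum x"
proof -
  assume "simple x"
  then obtain w where w: "bequiv x (pword w)" "simple_word w" using simple_iff_simple_word by blast
  have "exp_sum (pword w) = int (length w)" by (induction w) (auto simp: exp_sum_def pword_def)
  moreover have "perm_of_bword (pword w) = perm_of w" by (simp add: perm_of_bword_def pword_def o_def)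
  ultimately show ?thesis
    using bequiv_invariants[OF w(1)] simple_word_reduced[OF w(2)] by (simp add: reduced_def)
qed

lemma left_weighted_by_invariants:
  assumes "\<forall>i\<in>{1,2,3,4}. int (inversions (perm_of_bword (s1 @ sig i))) \<noteq> exp_sum (s1 @ sig i) \<or>
    int (inversions (perm_of_bword (winv (sig i) @ s2))) \<noteq> exp_sum (winv (sig i) @ s2)"
  shows "left_weighted s1 s2"
proof -
  have "i \<in> {1..4} \<Longrightarrow> i \<in> {1,2,3,4::nat}" for i by auto
  then show ?thesis using assms simple_inversions_exp_sum unfolding left_weighted_def by blast
qed

lemma proper_simple_pword:
  assumes "reduced w" "w \<noteq> []" "length w \<noteq> 10"
  shows "simple (pword w) \<and> \<not> bequiv (pword w) [] \<and> \<not> bequiv (pword w) Delta"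
proof -
  have len: "exp_sum (pword v) = int (length v)" for v by (induction v) (auto simp: exp_sum_def pword_def)
  have "simple (pword w)" using reduced_simple_word[OF assms(1)] bequiv.refl simple_iff_simple_word by blast
  moreover have "\<not> bequiv (pword w) []"
  proof
    assume "bequiv (pword w) []"
    then have "exp_sum (pword w) = exp_sum []" using bequiv_invariants by blast
    then show False using assms(2) len[of w] by (simp add: exp_sum_def)
  qed
  moreover have "\<not> bequiv (pword w) Delta"
  proof
    assume "bequiv (pword w) Delta"
    then have "exp_sum (pword w) = exp_sum (pword delta_word)"
      using bequiv_invariants unfolding Delta_pword by blast
    then show False using assms(3) len length_delta_word by simp
  qed
  ultimately show ?thesis by blast
qed

section \<open>The braid \<open>\<beta>\<^sub>k\<close>\<close>

lemma left_weighted_replicate_pattern: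
  assumes "1 \<le> n" "1 \<le> m" "R a a" "R a b" "R b c" "R c d" "R d d"
  shows "\<forall>i. Suc i < length (replicate n a @ [b, c] @ replicate m d) \<longrightarrow>
     R ((replicate n a @ [b, c] @ replicate m d) ! i) ((replicate n a @ [b, c] @ replicate m d) ! Suc i)"
proof (intro allI impI)
  fix i
  let ?L = "replicate n a @ [b, c] @ replicate m d"
  assume i: "Suc i < length ?L"
  have nth: "?L ! j = (if j < n then a else if j = n then b else if j = n + 1 then c else d)" if "j < length ?L" for j
    using that by (auto simp: nth_append nth_Cons split: nat.split)
  show "R (?L ! i) (?L ! Suc i)" using i assms nth[of i] nth[of "Suc i"] by (auto split: if_splits)
qed

lemma peq_far_commute: "set w \<subseteq> {1,2} \<Longrightarrow> peq (replicate n 4 @ w) (w @ replicate n 4)"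
proof (induction n)
  case (Suc n)
  have "peq (4 # w) (w @ [4])" using Suc.prems
  proof (induction w)
    case (Cons a w)
    then have "peq (4 # a # w) (a # 4 # w)" by (intro peq_far_swap) (auto simp: far_def)
    then show ?case using Cons by (simp add: peq_Cons_trans)
  qed simp
  then have "peq (4 # w @ replicate n 4) ((w @ [4]) @ replicate n 4)" using peq_append_right by fastforce
  with peq_Cons[OF Suc.IH[OF Suc.prems], of 4] show ?case by (simp add: peq_trans)
qed simp

lemma peq_Delta3_pow: "peq (concat (replicate (2 * m) [2,1,2])) (concat (replicate (3 * m) [2,1::nat]))"
proof (induction m)
  case (Suc m)
  have "peq ([2,1,2,2,1,2] @ concat (replicate (2 * m) [2,1,2::nat]))
      ([2,1,2,1,2,1] @ concat (replicate (2 * m) [2,1,2::nat]))"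
    using peq_Cons[OF peq_Cons[OF peq_Cons[OF peq_braid[of 2 1]]]] by (simp add: adj_def)
  also have "peq \<dots> ([2,1,2,1,2,1] @ concat (replicate (3 * m) [2,1::nat]))" using Suc.IH by (rule peq_append_left)
  finally show ?case by (simp add: numeral_3_eq_3)
qed simp

text \<open>The positive word of the claimed normal form rewrites to that of \<open>\<beta>\<^sub>k\<close>: the \<open>\<sigma>\<^sub>4\<close> of each
  \<open>\<Delta>\<^sub>3\<sigma>\<^sub>4\<close> commutes to the right, \<open>\<Delta>\<^sub>3\<^sup>2 = \<delta>\<^sub>3\<^sup>3\<close>, and \<open>\<sigma>\<^sub>4\<sigma>\<^sub>3\<sigma>\<^sub>4\<sigma>\<^sub>3\<sigma>\<^sub>4 = \<sigma>\<^sub>4\<^sup>2\<sigma>\<^sub>3\<sigma>\<^sub>4\<^sup>2\<close>.\<close>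

lemma beta_peq:
  assumes "2 \<le> k"
  shows "peq (concat (replicate (2 * k) [2,1,2,4]) @ [2,1,4,3,4] @ [3,4] @ replicate (2 * k - 3) 4)
             (concat (replicate (3 * k + 1) [2,1]) @ replicate (2 * k + 2) 4 @ [3] @ replicate (2 * k - 1) 4)"
proof -
  define T where "T = replicate (2 * k - 3) (4::nat)"
  have split4: "peq (concat (replicate n [2,1,2,4])) (concat (replicate n [2,1,2]) @ replicate n (4::nat))" for n
  proof (induction n)
    case (Suc n)
    have "peq (concat (replicate (Suc n) [2,1,2,4])) ([2,1,2] @ 4 # concat (replicate n [2,1,2]) @ replicate n 4)"
      using peq_append_left[OF Suc.IH, of "[2,1,2,4]"] by simp
    also have "peq \<dots> ([2,1,2] @ (concat (replicate n [2,1,2]) @ [4]) @ replicate n 4)"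
    proof -
      have "set (concat (replicate n [2,1,2::nat])) \<subseteq> {1,2}" by (induction n) auto
      from peq_append[OF peq_far_commute[OF this, of 1], of "[2,1,2]" "replicate n 4"] show ?thesis by simp
    qed
    finally show ?case by simp
  qed simp
  have "peq (concat (replicate (2 * k) [2,1,2,4]) @ [2,1,4,3,4] @ [3,4] @ T)
      ((concat (replicate (2 * k) [2,1,2]) @ replicate (2 * k) 4) @ [2,1] @ [4,3,4,3,4] @ T)"
    using peq_append_right[OF split4] by simp
  also have "peq \<dots> (concat (replicate (2 * k) [2,1,2]) @ ([2,1] @ replicate (2 * k) 4) @ [4,3,4,3,4] @ T)"
    using peq_append[OF peq_far_commute[of "[2,1]" "2 * k"]] by simp
  also have "peq \<dots> (concat (replicate (3 * k) [2,1]) @ ([2,1] @ replicate (2 * k) 4) @ [4,3,4,3,4] @ T)"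
    using peq_append_right[OF peq_Delta3_pow[of k]] by simp
  also have "peq \<dots> (concat (replicate (3 * k) [2,1]) @ ([2,1] @ replicate (2 * k) 4) @ [4,4,3,4,4] @ T)"
    using peq_append[OF peq_Cons[OF peq_braid[of 3 4 "[4]"], of 4],
        of "concat (replicate (3 * k) [2,1]) @ [2,1] @ replicate (2 * k) 4" T] by (simp add: adj_def)
  also have "peq \<dots> (concat (replicate (3 * k + 1) [2,1]) @ replicate (2 * k + 2) 4 @ [3] @ replicate (2 * k - 1) 4)"
  proof -
    have e1: "concat (replicate (n + 1) w) = concat (replicate n w) @ w" for n and w :: "nat list"
      by (induction n) auto
    have e2: "replicate (n + 2) x = replicate n x @ [x, x]" for n and x :: nat by (induction n) auto
    have e3: "replicate (n + 2) x = [x, x] @ replicate n x" for n and x :: nat by (induction n) auto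
    obtain j where j: "2 * k - 3 = j" "2 * k - 1 = j + 2" using assms by (intro that[of "2 * k - 3"]) auto
    show ?thesis unfolding e1[of "3 * k"] e2[of "2 * k"] j(2) e3[of j] T_def j(1) by simp
  qed
  finally show ?thesis unfolding T_def .
qed

lemma beta_LNF:
  assumes "2 \<le> k"
  shows "is_LNF (wpow delta3 (3 * k + 1) @ wpow (sig 4) (2 * k + 2) @ sig 3 @ wpow (sig 4) (2 * k - 1)) 0
           (replicate (2 * k) (Delta3 @ sig 4) @ [delta3 @ sig 4 @ sig 3 @ sig 4, sig 3 @ sig 4]
            @ replicate (2 * k - 3) (sig 4))"
proof -
  have wpow: "wpow (pword w) n = pword (concat (replicate n w))" for w n
    by (induction n) (auto simp: wpow_def pword_append pword_def)
  have rep: "concat (replicate n [x]) = replicate n x" for n and x :: nat by (induction n) auto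
  have concat_rep: "concat (replicate n (pword w)) = pword (concat (replicate n w))" for n w
    using wpow[of w n] by (simp add: wpow_def)
  have factors: "Delta3 @ sig 4 = pword [2,1,2,4]" "delta3 @ sig 4 @ sig 3 @ sig 4 = pword [2,1,4,3,4]"
      "sig 3 @ sig 4 = pword [3,4]" "sig 4 = pword [4]" "delta3 = pword [2,1]"
    by (simp_all add: Delta3_def delta3_def sig_def pword_def)
  let ?xs = "replicate (2 * k) (pword [2,1,2,4]) @ [pword [2,1,4,3,4], pword [3,4]] @ replicate (2 * k - 3) (pword [4])"
  have "wpow delta3 (3 * k + 1) @ wpow (sig 4) (2 * k + 2) @ sig 3 @ wpow (sig 4) (2 * k - 1)
      = pword (concat (replicate (3 * k + 1) [2,1]) @ replicate (2 * k + 2) 4 @ [3] @ replicate (2 * k - 1) 4)"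
    unfolding factors(5) sig_pword wpow rep pword_append ..
  also have "bequiv \<dots> (pword (concat (replicate (2 * k) [2,1,2,4]) @ [2,1,4,3,4] @ [3,4] @ replicate (2 * k - 3) 4))"
    using peq_bequiv[OF peq_sym[OF beta_peq[OF assms]]] .
  also have "\<dots> = Delta_pow 0 @ concat ?xs"
    by (simp only: Delta_pow_def wpow_def concat_append concat.simps append_Nil2 concat_rep rep pword_append
        append_assoc) simp
  finally have "bequiv (wpow delta3 (3 * k + 1) @ wpow (sig 4) (2 * k + 2) @ sig 3 @ wpow (sig 4) (2 * k - 1))
      (Delta_pow 0 @ concat ?xs)" .
  moreover have "\<forall>s\<in>set ?xs. simple s \<and> \<not> bequiv s [] \<and> \<not> bequiv s Delta"
    using proper_simple_pword[of "[2,1,2,4]"] proper_simple_pword[of "[2,1,4,3,4]"]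
      proper_simple_pword[of "[3,4]"] proper_simple_pword[of "[4]"]
    by (auto simp: reduced_def perm_of_def perm_id_def)
  moreover have "\<forall>i. Suc i < length ?xs \<longrightarrow> left_weighted (?xs ! i) (?xs ! Suc i)"
    by (rule left_weighted_replicate_pattern) (use assms in \<open>simp_all add: left_weighted_by_invariants
        pword_def sig_def winv_def exp_sum_def perm_of_bword_def perm_of_def perm_id_def\<close>)
  moreover have "replicate (2 * k) (Delta3 @ sig 4) @ [delta3 @ sig 4 @ sig 3 @ sig 4, sig 3 @ sig 4]
      @ replicate (2 * k - 3) (sig 4) = ?xs"
    by (simp add: Delta3_def delta3_def sig_def pword_def)
  ultimately show ?thesis unfolding is_LNF_def by (simp only:)
qed

theorem mainTheorem2:
  fixes k :: nat
  assumes "k \<ge> 2"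
  defines "beta \<equiv> wpow delta3 (3 * k + 1) @ wpow (sig 4) (2 * k + 2) @ sig 3 @ wpow (sig 4) (2 * k - 1)"
  shows "is_LNF beta 0
           (replicate (2 * k) (Delta3 @ sig 4) @ [delta3 @ sig 4 @ sig 3 @ sig 4, sig 3 @ sig 4]
            @ replicate (2 * k - 3) (sig 4))
         \<and> binf beta = 0 \<and> bsup beta = 4 * int k - 1"
proof -
  have LNF: "is_LNF beta 0 (replicate (2 * k) (Delta3 @ sig 4) @ [delta3 @ sig 4 @ sig 3 @ sig 4, sig 3 @ sig 4]
      @ replicate (2 * k - 3) (sig 4))"
    unfolding beta_def by (rule beta_LNF[OF assms(1)])
  moreover have "int (2 * k + 2 + (2 * k - 3)) = 4 * int k - 1" using assms(1) by simp
  ultimately show ?thesis using binf_bsup_LNF[OF LNF] by simp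
qed

end
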